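(* Any strongly regular Weingarten surface in $\mathbb R^3$ admits locally geometric principal parameters.
   Context: For a surface $x=x(u,v)$ without umbilical points parameterized by principal parameters ($F=M=0$, with $E,F,G$, $L,M,N$ the coefficients of the first and second fundamental forms): $\nu_1=L/E$, $\nu_2=N/G$, $\gamma_1=-\frac{E_v}{2E\sqrt G}$, $\gamma_2=\frac{G_u}{2G\sqrt E}$. The surface is strongly regular if $(\nu_1-\nu_2)\gamma_1\gamma_2\neq0$, with the convention $\nu_1-\nu_2>0$. A strongly regular surface is Weingarten if there exist differentiable $f(\nu),g(\nu)$, $\nu\in\mathcal I\subseteq\mathbb R$, with $f-g>0$, $f'g'\neq0$, and a differentiable $\nu(u,v)\in\mathcal I$ with $\nu_u\nu_v\neq0$, such that $\nu_1=f(\nu)$, $\nu_2=g(\nu)$. With $\Phi$ an antiderivative of $f'/(f-g)$ and $\Psi$ an antiderivative of $g'/(g-f)$, put $\lambda=\ln\sqrt E+\Phi(\nu)$ and $\mu=\ln\sqrt G+\Psi(\nu)$ (one always has $\lambda_v=0$, $\mu_u=0$). Principal parameters $(u,v)$ on a strongly regular Weingarten surface are called geometric principal parameters if $\lambda$ and $\mu$ are constants. *)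

theory Defs
  imports "HOL-Analysis.Analysis"
begin

definition pu :: "(real \<Rightarrow> real \<Rightarrow> 'a::real_normed_vector) \<Rightarrow> real \<Rightarrow> real \<Rightarrow> 'a" where
  "pu f u v = vector_derivative (\<lambda>s. f s v) (at u)"

definition pv :: "(real \<Rightarrow> real \<Rightarrow> 'a::real_normed_vector) \<Rightarrow> real \<Rightarrow> real \<Rightarrow> 'a" where
  "pv f u v = vector_derivative (\<lambda>t. f u t) (at v)"

fun Ck_on :: "nat \<Rightarrow> (real \<times> real) set \<Rightarrow> (real \<Rightarrow> real \<Rightarrow> 'a::real_normed_vector) \<Rightarrow> bool" where
  "Ck_on 0 D f = continuous_on D (\<lambda>(u,v). f u v)"
| "Ck_on (Suc k) D f =
     (continuous_on D (\<lambda>(u,v). f u v) \<and>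
      (\<forall>(u,v)\<in>D. ((\<lambda>s. f s v) has_vector_derivative pu f u v) (at u) \<and>
                 ((\<lambda>t. f u t) has_vector_derivative pv f u v) (at v)) \<and>
      Ck_on k D (pu f) \<and> Ck_on k D (pv f))"

definition smooth_on2 :: "(real \<times> real) set \<Rightarrow> (real \<Rightarrow> real \<Rightarrow> 'a::real_normed_vector) \<Rightarrow> bool" where
  "smooth_on2 D f \<longleftrightarrow> (\<forall>k. Ck_on k D f)"

type_synonym surf = "real \<Rightarrow> real \<Rightarrow> real^3"

definition fE :: "surf \<Rightarrow> real \<Rightarrow> real \<Rightarrow> real" where
  "fE x u v = pu x u v \<bullet> pu x u v"
definition fF :: "surf \<Rightarrow> real \<Rightarrow> real \<Rightarrow> real" where
  "fF x u v = pu x u v \<bullet> pv x u v"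
definition fG :: "surf \<Rightarrow> real \<Rightarrow> real \<Rightarrow> real" where
  "fG x u v = pv x u v \<bullet> pv x u v"

definition unit_normal :: "surf \<Rightarrow> real \<Rightarrow> real \<Rightarrow> real^3" where
  "unit_normal x u v = (1 / norm (cross3 (pu x u v) (pv x u v))) *\<^sub>R cross3 (pu x u v) (pv x u v)"

definition fL :: "surf \<Rightarrow> real \<Rightarrow> real \<Rightarrow> real" where
  "fL x u v = pu (pu x) u v \<bullet> unit_normal x u v"
definition fM :: "surf \<Rightarrow> real \<Rightarrow> real \<Rightarrow> real" where
  "fM x u v = pv (pu x) u v \<bullet> unit_normal x u v"
definition fN :: "surf \<Rightarrow> real \<Rightarrow> real \<Rightarrow> real" where
  "fN x u v = pv (pv x) u v \<bullet> unit_normal x u v"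

definition nu1 :: "surf \<Rightarrow> real \<Rightarrow> real \<Rightarrow> real" where
  "nu1 x u v = fL x u v / fE x u v"
definition nu2 :: "surf \<Rightarrow> real \<Rightarrow> real \<Rightarrow> real" where
  "nu2 x u v = fN x u v / fG x u v"
definition gamma1 :: "surf \<Rightarrow> real \<Rightarrow> real \<Rightarrow> real" where
  "gamma1 x u v = - pv (fE x) u v / (2 * fE x u v * sqrt (fG x u v))"
definition gamma2 :: "surf \<Rightarrow> real \<Rightarrow> real \<Rightarrow> real" where
  "gamma2 x u v = pu (fG x) u v / (2 * fG x u v * sqrt (fE x u v))"

definition regular_surface :: "(real \<times> real) set \<Rightarrow> surf \<Rightarrow> bool" where
  "regular_surface D x \<longleftrightarrow> open D \<and> smooth_on2 D x \<and>
     (\<forall>(u,v)\<in>D. cross3 (pu x u v) (pv x u v) \<noteq> 0)"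

definition principal_params :: "(real \<times> real) set \<Rightarrow> surf \<Rightarrow> bool" where
  "principal_params D x \<longleftrightarrow> (\<forall>(u,v)\<in>D. fF x u v = 0 \<and> fM x u v = 0)"

text \<open>Strongly regular, with the convention nu1 - nu2 > 0.\<close>
definition strongly_regular :: "(real \<times> real) set \<Rightarrow> surf \<Rightarrow> bool" where
  "strongly_regular D x \<longleftrightarrow>
     (\<forall>(u,v)\<in>D. (nu1 x u v - nu2 x u v) * gamma1 x u v * gamma2 x u v \<noteq> 0 \<and>
                nu1 x u v - nu2 x u v > 0)"

definition weingarten_data ::
  "(real \<times> real) set \<Rightarrow> surf \<Rightarrow> real set \<Rightarrow> (real \<Rightarrow> real) \<Rightarrow> (real \<Rightarrow> real)
     \<Rightarrow> (real \<Rightarrow> real \<Rightarrow> real) \<Rightarrow> bool" where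
  "weingarten_data D x I f g nu \<longleftrightarrow>
     open I \<and>
     (\<forall>t\<in>I. f differentiable (at t) \<and> g differentiable (at t) \<and>
             f t - g t > 0 \<and> deriv f t * deriv g t \<noteq> 0) \<and>
     (\<lambda>(u,v). nu u v) differentiable_on D \<and>
     (\<forall>(u,v)\<in>D. nu u v \<in> I \<and> pu nu u v * pv nu u v \<noteq> 0 \<and>
                nu1 x u v = f (nu u v) \<and> nu2 x u v = g (nu u v))"

definition lam :: "surf \<Rightarrow> (real \<Rightarrow> real) \<Rightarrow> (real \<Rightarrow> real \<Rightarrow> real) \<Rightarrow> real \<Rightarrow> real \<Rightarrow> real" where
  "lam x Phi nu u v = ln (sqrt (fE x u v)) + Phi (nu u v)"
definition mu :: "surf \<Rightarrow> (real \<Rightarrow> real) \<Rightarrow> (real \<Rightarrow> real \<Rightarrow> real) \<Rightarrow> real \<Rightarrow> real \<Rightarrow> real" where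
  "mu x Psi nu u v = ln (sqrt (fG x u v)) + Psi (nu u v)"

definition geometric_params ::
  "(real \<times> real) set \<Rightarrow> surf \<Rightarrow> (real \<Rightarrow> real) \<Rightarrow> (real \<Rightarrow> real) \<Rightarrow> (real \<Rightarrow> real \<Rightarrow> real) \<Rightarrow> bool" where
  "geometric_params D x Phi Psi nu \<longleftrightarrow>
     (\<exists>c. \<forall>(u,v)\<in>D. lam x Phi nu u v = c) \<and> (\<exists>d. \<forall>(u,v)\<in>D. mu x Psi nu u v = d)"

definition param_change ::
  "(real \<times> real) set \<Rightarrow> (real \<times> real) set \<Rightarrow> (real \<Rightarrow> real \<Rightarrow> real) \<Rightarrow> (real \<Rightarrow> real \<Rightarrow> real) \<Rightarrow> bool" where
  "param_change V U p q \<longleftrightarrow>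
     open V \<and> open U \<and> smooth_on2 V p \<and> smooth_on2 V q \<and>
     bij_betw (\<lambda>(s,t). (p s t, q s t)) V U \<and>
     (\<exists>P Q. smooth_on2 U P \<and> smooth_on2 U Q \<and>
        (\<forall>(u,v)\<in>U. (P u v, Q u v) \<in> V \<and> p (P u v) (Q u v) = u \<and> q (P u v) (Q u v) = v))"

end

theory Submission
  imports Defs
begin

text \<open>In principal parameters the Codazzi equations read
  \<open>(nu1)\<^sub>v = (nu2 - nu1) E\<^sub>v / (2E)\<close> and \<open>(nu2)\<^sub>u = (nu1 - nu2) G\<^sub>u / (2G)\<close>.
  On a Weingarten surface \<open>nu1 = f \<circ> nu\<close> and \<open>Phi' = f' / (f - g)\<close> turn the first into
  \<open>lam\<^sub>v = 0\<close>, and likewise the second into \<open>mu\<^sub>u = 0\<close>; so near a point \<open>lam\<close> depends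
  on \<open>u\<close> only and \<open>mu\<close> on \<open>v\<close> only. Reparametrizing each coordinate separately,
  \<open>u = p(s)\<close> with \<open>p' = exp (- lam(p, v\<^sub>0))\<close> and \<open>v = q(t)\<close> with \<open>q' = exp (- mu(u\<^sub>0, q))\<close>,
  keeps the parameters principal, leaves \<open>nu1, nu2, gamma1, gamma2\<close> unchanged and
  multiplies \<open>sqrt E\<close> by \<open>p'\<close> and \<open>sqrt G\<close> by \<open>q'\<close>; hence the new \<open>lam\<close> and \<open>mu\<close> vanish.\<close>

section \<open>Smooth functions of two variables\<close>

lemma Ck_on_continuous: "Ck_on k D f \<Longrightarrow> continuous_on D (\<lambda>(u,v). f u v)"
  by (cases k) auto

lemma Ck_on_SucI:
  assumes "continuous_on D (\<lambda>(u,v). f u v)"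
    "\<And>u v. (u,v) \<in> D \<Longrightarrow> ((\<lambda>s. f s v) has_vector_derivative pu f u v) (at u)"
    "\<And>u v. (u,v) \<in> D \<Longrightarrow> ((\<lambda>t. f u t) has_vector_derivative pv f u v) (at v)"
    "Ck_on k D (pu f)" "Ck_on k D (pv f)"
  shows "Ck_on (Suc k) D f"
  using assms by auto

lemma Ck_on_SucD:
  assumes "Ck_on (Suc k) D f"
  shows "continuous_on D (\<lambda>(u,v). f u v)"
    "\<And>u v. (u,v) \<in> D \<Longrightarrow> ((\<lambda>s. f s v) has_vector_derivative pu f u v) (at u)"
    "\<And>u v. (u,v) \<in> D \<Longrightarrow> ((\<lambda>t. f u t) has_vector_derivative pv f u v) (at v)"
    "Ck_on k D (pu f)" "Ck_on k D (pv f)"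
  using assms by auto

declare Ck_on.simps(2)[simp del]

lemma Ck_on_Suc_imp: "Ck_on (Suc k) D f \<Longrightarrow> Ck_on k D f"
proof (induction k arbitrary: f)
  case 0
  then show ?case by (simp add: Ck_on_continuous)
next
  case (Suc k)
  show ?case
    by (rule Ck_on_SucI) (use Ck_on_SucD[OF Suc.prems] Suc.IH in auto)
qed

lemma Ck_on_subset: "Ck_on k D f \<Longrightarrow> D' \<subseteq> D \<Longrightarrow> Ck_on k D' f"
proof (induction k arbitrary: f)
  case 0
  then show ?case using continuous_on_subset by auto
next
  case (Suc k)
  show ?case
    by (rule Ck_on_SucI) (use Ck_on_SucD[OF Suc.prems(1)] Suc in \<open>blast intro: continuous_on_subset\<close>)+
qed

lemma pu_eqI: "((\<lambda>s. f s v) has_vector_derivative d) (at u) \<Longrightarrow> pu f u v = d"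
  unfolding pu_def by (rule vector_derivative_at)

lemma pv_eqI: "((\<lambda>t. f u t) has_vector_derivative d) (at v) \<Longrightarrow> pv f u v = d"
  unfolding pv_def by (rule vector_derivative_at)

lemma pu_cong:
  assumes "open D" "\<forall>(u,v)\<in>D. f u v = g u v" "(u,v) \<in> D"
  shows "pu f u v = pu g u v"
proof -
  obtain e where e: "e > 0" "ball (u,v) e \<subseteq> D" using assms openE by blast
  have "\<forall>\<^sub>F s in nhds u. f s v = g s v"
    unfolding eventually_nhds
    by (rule exI[of _ "ball u e"]) (use e assms(2) in \<open>auto simp: dist_Pair_Pair dist_commute subset_iff\<close>)
  then show ?thesis unfolding pu_def
    by (intro vector_derivative_cong_eq[where A=UNIV]) (auto elim: eventually_mono)
qed

lemma pv_cong:
  assumes "open D" "\<forall>(u,v)\<in>D. f u v = g u v" "(u,v) \<in> D"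
  shows "pv f u v = pv g u v"
proof -
  obtain e where e: "e > 0" "ball (u,v) e \<subseteq> D" using assms openE by blast
  have "\<forall>\<^sub>F t in nhds v. f u t = g u t"
    unfolding eventually_nhds
    by (rule exI[of _ "ball v e"]) (use e assms(2) in \<open>auto simp: dist_Pair_Pair dist_commute subset_iff\<close>)
  then show ?thesis unfolding pv_def
    by (intro vector_derivative_cong_eq[where A=UNIV]) (auto elim: eventually_mono)
qed

lemma pu_eq_0_if_constant:
  assumes "open D" "\<forall>(u,v)\<in>D. g u v = c" "(u,v) \<in> D"
  shows "pu g u v = 0"
  using pu_cong[OF assms] by (simp add: pu_def)

lemma pv_eq_0_if_constant:
  assumes "open D" "\<forall>(u,v)\<in>D. g u v = c" "(u,v) \<in> D"
  shows "pv g u v = 0"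
  using pv_cong[OF assms] by (simp add: pv_def)

lemma open_slice_u: "open (D::(real \<times> real) set) \<Longrightarrow> open {s. (s,v) \<in> D}"
  using open_vimage[of D "\<lambda>s::real. (s,v)"] by (simp add: vimage_def continuous_on_Pair)

lemma open_slice_v: "open (D::(real \<times> real) set) \<Longrightarrow> open {t. (u,t) \<in> D}"
  using open_vimage[of D "\<lambda>t::real. (u,t)"] by (simp add: vimage_def continuous_on_Pair)

lemma Ck_on_cong:
  assumes "open D" "\<forall>(u,v)\<in>D. f u v = g u v" "Ck_on k D f"
  shows "Ck_on k D g"
  using assms(2,3)
proof (induction k arbitrary: f g)
  case 0
  then show ?case by (auto intro: continuous_on_eq)
next
  case (Suc k)
  note f = Ck_on_SucD[OF Suc.prems(2)]
  have eq: "\<forall>(u,v)\<in>D. pu f u v = pu g u v" "\<forall>(u,v)\<in>D. pv f u v = pv g u v"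
    using pu_cong[OF assms(1) Suc.prems(1)] pv_cong[OF assms(1) Suc.prems(1)] by auto
  show ?case
  proof (rule Ck_on_SucI)
    show "continuous_on D (\<lambda>(u,v). g u v)"
      using f(1) Suc.prems(1) by (auto intro: continuous_on_eq)
    fix u v assume uv: "(u,v) \<in> D"
    have e: "pu g u v = pu f u v" "pv g u v = pv f u v" using eq uv by auto
    show "((\<lambda>s. g s v) has_vector_derivative pu g u v) (at u)"
      unfolding e
      by (rule has_vector_derivative_transform_within_open[OF f(2)[OF uv] open_slice_u[OF assms(1)]])
        (use uv Suc.prems(1) in auto)
    show "((\<lambda>t. g u t) has_vector_derivative pv g u v) (at v)"
      unfolding e
      by (rule has_vector_derivative_transform_within_open[OF f(3)[OF uv] open_slice_v[OF assms(1)]])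
        (use uv Suc.prems(1) in auto)
  qed (use Suc.IH f(4,5) eq in blast)+
qed

lemma Ck_on_SucI_derivatives:
  assumes "open D" "continuous_on D (\<lambda>(u,v). f u v)"
    "\<And>u v. (u,v) \<in> D \<Longrightarrow> ((\<lambda>s. f s v) has_vector_derivative fu u v) (at u)"
    "\<And>u v. (u,v) \<in> D \<Longrightarrow> ((\<lambda>t. f u t) has_vector_derivative fv u v) (at v)"
    "Ck_on k D fu" "Ck_on k D fv"
  shows "Ck_on (Suc k) D f"
proof -
  have eq: "\<forall>(u,v)\<in>D. fu u v = pu f u v" "\<forall>(u,v)\<in>D. fv u v = pv f u v"
    using assms(3,4) by (auto intro: pu_eqI[symmetric] pv_eqI[symmetric])
  show ?thesis
  proof (rule Ck_on_SucI[OF assms(2)])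
    fix u v assume "(u,v) \<in> D"
    then show "((\<lambda>s. f s v) has_vector_derivative pu f u v) (at u)"
      and "((\<lambda>t. f u t) has_vector_derivative pv f u v) (at v)"
      using assms(3,4) eq by (metis (mono_tags, lifting) case_prodD)+
  qed (use Ck_on_cong[OF assms(1) eq(1) assms(5)] Ck_on_cong[OF assms(1) eq(2) assms(6)] in auto)
qed

lemma Ck_on_const: "Ck_on k D (\<lambda>u v. c)"
proof (induction k arbitrary: c)
  case 0
  then show ?case by (simp add: continuous_on_const)
next
  case (Suc k)
  have "pu (\<lambda>u v. c) = (\<lambda>u v. 0)" "pv (\<lambda>u v. c) = (\<lambda>u v. 0)"
    by (auto simp: pu_def pv_def fun_eq_iff)
  then show ?case using Suc by (intro Ck_on_SucI) (auto simp: continuous_on_const)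
qed

lemma Ck_on_add:
  assumes "open D" "Ck_on k D a" "Ck_on k D b"
  shows "Ck_on k D (\<lambda>u v. a u v + b u v)"
  using assms(2,3)
proof (induction k arbitrary: a b)
  case 0
  then show ?case by (auto intro!: continuous_on_add simp: split_beta)
next
  case (Suc k)
  note a = Ck_on_SucD[OF Suc.prems(1)] and b = Ck_on_SucD[OF Suc.prems(2)]
  show ?case
    by (rule Ck_on_SucI_derivatives[OF assms(1), where fu="\<lambda>u v. pu a u v + pu b u v"
          and fv="\<lambda>u v. pv a u v + pv b u v"])
      (use a b Suc.IH in \<open>auto intro!: continuous_on_add has_vector_derivative_add simp: split_beta\<close>)
qed

lemma Ck_on_bilinear:
  assumes bop: "bounded_bilinear bop" and "open D" "Ck_on k D a" "Ck_on k D b"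
  shows "Ck_on k D (\<lambda>u v. bop (a u v) (b u v))"
  using assms(3,4)
proof (induction k arbitrary: a b)
  case 0
  then show ?case
    using bounded_bilinear.continuous_on[OF bop, of D "\<lambda>(u,v). a u v" "\<lambda>(u,v). b u v"]
    by (auto simp: split_beta)
next
  case (Suc k)
  note a = Ck_on_SucD[OF Suc.prems(1)] and b = Ck_on_SucD[OF Suc.prems(2)]
  have k: "Ck_on k D a" "Ck_on k D b" using Suc.prems Ck_on_Suc_imp by blast+
  show ?case
  proof (rule Ck_on_SucI_derivatives[OF assms(2),
        where fu="\<lambda>u v. bop (a u v) (pu b u v) + bop (pu a u v) (b u v)"
        and fv="\<lambda>u v. bop (a u v) (pv b u v) + bop (pv a u v) (b u v)"])
    show "continuous_on D (\<lambda>(u,v). bop (a u v) (b u v))"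
      using bounded_bilinear.continuous_on[OF bop, of D "\<lambda>(u,v). a u v" "\<lambda>(u,v). b u v"] a(1) b(1)
      by (simp add: split_beta)
  qed (use a b k Suc.IH in \<open>auto intro!: bounded_bilinear.has_vector_derivative[OF bop] Ck_on_add[OF assms(2)]\<close>)
qed

lemma Ck_on_mult:
  "open D \<Longrightarrow> Ck_on k D a \<Longrightarrow> Ck_on k D b \<Longrightarrow> Ck_on k D (\<lambda>u v. a u v * (b u v :: real))"
  by (rule Ck_on_bilinear[OF bounded_bilinear_mult])

lemma Ck_on_scaleR:
  "open D \<Longrightarrow> Ck_on k D a \<Longrightarrow> Ck_on k D b \<Longrightarrow> Ck_on k D (\<lambda>u v. a u v *\<^sub>R b u v)"
  by (rule Ck_on_bilinear[OF bounded_bilinear_scaleR])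

lemma Ck_on_inner:
  "open D \<Longrightarrow> Ck_on k D a \<Longrightarrow> Ck_on k D b \<Longrightarrow> Ck_on k D (\<lambda>u v. inner (a u v) (b u v :: 'a::real_inner))"
  by (rule Ck_on_bilinear[OF bounded_bilinear_inner])

lemma Ck_on_cross3:
  "open D \<Longrightarrow> Ck_on k D a \<Longrightarrow> Ck_on k D b \<Longrightarrow> Ck_on k D (\<lambda>u v. cross3 (a u v) (b u v))"
  by (rule Ck_on_bilinear[OF bilinear_cross[THEN bilinear_conv_bounded_bilinear[THEN iffD1]]])

lemma Ck_on_uminus: "open D \<Longrightarrow> Ck_on k D a \<Longrightarrow> Ck_on k D (\<lambda>u v. - a u v :: real)"
  using Ck_on_mult[OF _ Ck_on_const[of k D "-1"]] by simp

lemma Ck_on_Suc_compose_real: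
  assumes "open D" "Ck_on (Suc k) D h" "\<forall>(u,v)\<in>D. h u v \<in> S"
    "\<And>t. t \<in> S \<Longrightarrow> (\<phi> has_real_derivative \<phi>' t) (at t)"
    "Ck_on k D (\<lambda>u v. \<phi>' (h u v))"
  shows "Ck_on (Suc k) D (\<lambda>u v. \<phi> (h u v))"
proof -
  note h = Ck_on_SucD[OF assms(2)]
  have "continuous_on ((\<lambda>(u,v). h u v) ` D) \<phi>"
    by (rule continuous_at_imp_continuous_on) (use assms(3,4) DERIV_isCont in fastforce)
  then have "continuous_on D (\<phi> \<circ> (\<lambda>(u,v). h u v))"
    by (rule continuous_on_compose[OF h(1)])
  then have c: "continuous_on D (\<lambda>(u,v). \<phi> (h u v))"
    by (simp add: o_def split_beta)
  show ?thesis
  proof (rule Ck_on_SucI_derivatives[OF assms(1) c, where fu="\<lambda>u v. \<phi>' (h u v) * pu h u v"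
        and fv="\<lambda>u v. \<phi>' (h u v) * pv h u v"])
    fix u v assume uv: "(u,v) \<in> D"
    have d: "(\<phi> has_real_derivative \<phi>' (h u v)) (at (h u v))" using assms(3,4) uv by auto
    show "((\<lambda>s. \<phi> (h s v)) has_vector_derivative \<phi>' (h u v) * pu h u v) (at u)"
      using DERIV_chain2[OF d h(2)[OF uv, unfolded has_real_derivative_iff_has_vector_derivative[symmetric]]]
      by (simp add: has_real_derivative_iff_has_vector_derivative)
    show "((\<lambda>t. \<phi> (h u t)) has_vector_derivative \<phi>' (h u v) * pv h u v) (at v)"
      using DERIV_chain2[OF d h(3)[OF uv, unfolded has_real_derivative_iff_has_vector_derivative[symmetric]]]
      by (simp add: has_real_derivative_iff_has_vector_derivative)
  qed (use Ck_on_mult[OF assms(1) assms(5)] h(4,5) in auto)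
qed

lemma Ck_on_inverse:
  assumes "open D" "Ck_on k D h" "\<forall>(u,v)\<in>D. h u v \<noteq> (0::real)"
  shows "Ck_on k D (\<lambda>u v. inverse (h u v))"
  using assms(2)
proof (induction k)
  case 0
  then show ?case using assms(3) by (auto intro!: continuous_on_inverse simp: split_beta)
next
  case (Suc k)
  have "Ck_on k D (\<lambda>u v. inverse (h u v))" using Suc Ck_on_Suc_imp by blast
  then have ck: "Ck_on k D (\<lambda>u v. - (inverse (h u v) * inverse (h u v)))"
    by (intro Ck_on_uminus Ck_on_mult assms(1))
  have d: "(inverse has_real_derivative - (inverse t * inverse t)) (at t)" if "t \<in> - {0}" for t :: real
    using DERIV_inverse[of t] that by (simp add: power2_eq_square)
  have "\<forall>(u,v)\<in>D. h u v \<in> - {0}" using assms(3) by auto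
  then show ?case by (rule Ck_on_Suc_compose_real[OF assms(1) Suc.prems _ d ck])
qed

lemma Ck_on_divide:
  "open D \<Longrightarrow> Ck_on k D a \<Longrightarrow> Ck_on k D h \<Longrightarrow> \<forall>(u,v)\<in>D. h u v \<noteq> 0
    \<Longrightarrow> Ck_on k D (\<lambda>u v. a u v / h u v :: real)"
  using Ck_on_mult[OF _ _ Ck_on_inverse, of D k a h] by (simp add: divide_inverse)

lemma Ck_on_sqrt:
  assumes "open D" "Ck_on k D h" "\<forall>(u,v)\<in>D. h u v > (0::real)"
  shows "Ck_on k D (\<lambda>u v. sqrt (h u v))"
  using assms(2)
proof (induction k)
  case 0
  then show ?case using assms(3) by (auto intro!: continuous_on_real_sqrt simp: split_beta)
next
  case (Suc k)
  have "Ck_on k D (\<lambda>u v. sqrt (h u v))" using Suc Ck_on_Suc_imp by blast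
  then have ck: "Ck_on k D (\<lambda>u v. inverse (sqrt (h u v)) / 2)"
    using assms(3) by (intro Ck_on_divide[OF assms(1)] Ck_on_inverse[OF assms(1)] Ck_on_const) auto
  have "\<forall>(u,v)\<in>D. h u v \<in> {0<..}" using assms(3) by auto
  then show ?case
    by (rule Ck_on_Suc_compose_real[OF assms(1) Suc.prems _ DERIV_real_sqrt ck]) simp
qed

lemma Ck_on_ln:
  assumes "open D" "Ck_on k D h" "\<forall>(u,v)\<in>D. h u v > (0::real)"
  shows "Ck_on k D (\<lambda>u v. ln (h u v))"
proof (cases k)
  case 0
  then show ?thesis using assms(2,3) by (auto intro!: continuous_on_ln simp: split_beta)
next
  case (Suc m)
  have ck: "Ck_on m D (\<lambda>u v. inverse (h u v))"
    using assms Suc Ck_on_Suc_imp by (intro Ck_on_inverse) auto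
  have "\<forall>(u,v)\<in>D. h u v \<in> {0<..}" using assms(3) by auto
  then show ?thesis
    unfolding Suc by (rule Ck_on_Suc_compose_real[OF assms(1) assms(2)[unfolded Suc] _ DERIV_ln ck]) simp
qed

lemma Ck_on_exp:
  assumes "open D" "Ck_on k D h"
  shows "Ck_on k D (\<lambda>u v. exp (h u v :: real))"
  using assms(2)
proof (induction k)
  case 0
  then show ?case by (auto intro!: continuous_on_exp simp: split_beta)
next
  case (Suc k)
  have "Ck_on k D (\<lambda>u v. exp (h u v))" using Suc Ck_on_Suc_imp by blast
  then show ?case
    by (intro Ck_on_Suc_compose_real[OF assms(1) Suc.prems, where S=UNIV] DERIV_exp) auto
qed

lemma Ck_on_compose_separate:
  assumes "open U" "open V" "Ck_on k U g" "Ck_on k V (\<lambda>s t. a s)" "Ck_on k V (\<lambda>s t. b t)"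
    "\<forall>(s,t)\<in>V. (a s, b t) \<in> U"
  shows "Ck_on k V (\<lambda>s t. g (a s) (b t))"
  using assms(3-5)
proof (induction k arbitrary: g)
  have cont: "continuous_on V (\<lambda>(s,t). g (a s) (b t))"
    if "continuous_on U (\<lambda>(u,v). g u v)" "continuous_on V (\<lambda>(s,t). a s)" "continuous_on V (\<lambda>(s,t). b t)"
    for g
  proof -
    have "continuous_on V (\<lambda>(s,t). (a s, b t))"
      using that(2,3) by (auto intro!: continuous_on_Pair simp: split_beta)
    then have "continuous_on V ((\<lambda>(u,v). g u v) \<circ> (\<lambda>(s,t). (a s, b t)))"
      by (rule continuous_on_compose) (use that(1) assms(6) in \<open>auto intro: continuous_on_subset\<close>)
    then show ?thesis by (simp add: o_def split_beta)
  qed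
  {
    case 0
    then show ?case using cont by simp
  next
    case (Suc k)
    note g = Ck_on_SucD[OF Suc.prems(1)] and a = Ck_on_SucD[OF Suc.prems(2)]
      and b = Ck_on_SucD[OF Suc.prems(3)]
    have k: "Ck_on k V (\<lambda>s t. a s)" "Ck_on k V (\<lambda>s t. b t)" using Suc.prems Ck_on_Suc_imp by blast+
    show ?case
    proof (rule Ck_on_SucI_derivatives[OF assms(2) cont[OF g(1) a(1) b(1)],
          where fu="\<lambda>s t. pu (\<lambda>s t. a s) s t *\<^sub>R pu g (a s) (b t)"
          and fv="\<lambda>s t. pv (\<lambda>s t. b t) s t *\<^sub>R pv g (a s) (b t)"])
      fix s t assume st: "(s,t) \<in> V"
      have "((\<lambda>u. g u (b t)) \<circ> a has_vector_derivative pu (\<lambda>s t. a s) s t *\<^sub>R pu g (a s) (b t)) (at s)"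
        by (rule vector_diff_chain_at) (use a(2)[OF st] g(2) assms(6) st in auto)
      then show "((\<lambda>s. g (a s) (b t)) has_vector_derivative pu (\<lambda>s t. a s) s t *\<^sub>R pu g (a s) (b t)) (at s)"
        by (simp add: o_def)
      have "((\<lambda>v. g (a s) v) \<circ> b has_vector_derivative pv (\<lambda>s t. b t) s t *\<^sub>R pv g (a s) (b t)) (at t)"
        by (rule vector_diff_chain_at) (use b(3)[OF st] g(3) assms(6) st in auto)
      then show "((\<lambda>t. g (a s) (b t)) has_vector_derivative pv (\<lambda>s t. b t) s t *\<^sub>R pv g (a s) (b t)) (at t)"
        by (simp add: o_def)
    next
      show "Ck_on k V (\<lambda>s t. pu (\<lambda>s t. a s) s t *\<^sub>R pu g (a s) (b t))"
        by (rule Ck_on_scaleR[OF assms(2) a(4) Suc.IH[OF g(4) k]])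
      show "Ck_on k V (\<lambda>s t. pv (\<lambda>s t. b t) s t *\<^sub>R pv g (a s) (b t))"
        by (rule Ck_on_scaleR[OF assms(2) b(5) Suc.IH[OF g(5) k]])
    qed
  }
qed

lemma smooth_on2_Ck_on: "smooth_on2 D f \<Longrightarrow> Ck_on k D f"
  by (simp add: smooth_on2_def)

lemma smooth_on2_continuous: "smooth_on2 D f \<Longrightarrow> continuous_on D (\<lambda>(u,v). f u v)"
  using smooth_on2_Ck_on Ck_on_continuous by blast

lemma smooth_on2_pu: "smooth_on2 D f \<Longrightarrow> smooth_on2 D (pu f)"
  unfolding smooth_on2_def using Ck_on_SucD(4) by blast

lemma smooth_on2_pv: "smooth_on2 D f \<Longrightarrow> smooth_on2 D (pv f)"
  unfolding smooth_on2_def using Ck_on_SucD(5) by blast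

lemma smooth_on2_has_pu:
  "smooth_on2 D f \<Longrightarrow> (u,v) \<in> D \<Longrightarrow> ((\<lambda>s. f s v) has_vector_derivative pu f u v) (at u)"
  unfolding smooth_on2_def using Ck_on_SucD(2) by blast

lemma smooth_on2_has_pv:
  "smooth_on2 D f \<Longrightarrow> (u,v) \<in> D \<Longrightarrow> ((\<lambda>t. f u t) has_vector_derivative pv f u v) (at v)"
  unfolding smooth_on2_def using Ck_on_SucD(3) by blast

lemma smooth_on2_has_real_pu:
  "smooth_on2 D f \<Longrightarrow> (u,v) \<in> D \<Longrightarrow> ((\<lambda>s. f s v) has_real_derivative pu f u v) (at u)"
  using smooth_on2_has_pu by (simp add: has_real_derivative_iff_has_vector_derivative)

lemma smooth_on2_has_real_pv:
  "smooth_on2 D f \<Longrightarrow> (u,v) \<in> D \<Longrightarrow> ((\<lambda>t. f u t) has_real_derivative pv f u v) (at v)"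
  using smooth_on2_has_pv by (simp add: has_real_derivative_iff_has_vector_derivative)

lemma smooth_on2_SucI:
  assumes "open D" "continuous_on D (\<lambda>(u,v). f u v)"
    "\<And>u v. (u,v) \<in> D \<Longrightarrow> ((\<lambda>s. f s v) has_vector_derivative fu u v) (at u)"
    "\<And>u v. (u,v) \<in> D \<Longrightarrow> ((\<lambda>t. f u t) has_vector_derivative fv u v) (at v)"
    "smooth_on2 D fu" "smooth_on2 D fv"
  shows "smooth_on2 D f"
  unfolding smooth_on2_def
proof
  fix k show "Ck_on k D f"
  proof (cases k)
    case 0
    then show ?thesis using assms(2) by simp
  next
    case (Suc m)
    then show ?thesis
      using Ck_on_SucI_derivatives[OF assms(1-4)] assms(5,6) by (simp add: smooth_on2_def)
  qed
qed

lemma smooth_on2_subset: "smooth_on2 D f \<Longrightarrow> D' \<subseteq> D \<Longrightarrow> smooth_on2 D' f"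
  unfolding smooth_on2_def using Ck_on_subset by blast

lemma smooth_on2_cong: "open D \<Longrightarrow> \<forall>(u,v)\<in>D. f u v = g u v \<Longrightarrow> smooth_on2 D f \<Longrightarrow> smooth_on2 D g"
  unfolding smooth_on2_def using Ck_on_cong by blast

lemma smooth_on2_const: "smooth_on2 D (\<lambda>u v. c)"
  unfolding smooth_on2_def using Ck_on_const by blast

lemma smooth_on2_add:
  "open D \<Longrightarrow> smooth_on2 D a \<Longrightarrow> smooth_on2 D b \<Longrightarrow> smooth_on2 D (\<lambda>u v. a u v + b u v)"
  unfolding smooth_on2_def using Ck_on_add by blast

lemma smooth_on2_uminus: "open D \<Longrightarrow> smooth_on2 D a \<Longrightarrow> smooth_on2 D (\<lambda>u v. - a u v :: real)"
  unfolding smooth_on2_def using Ck_on_uminus by blast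

lemma smooth_on2_diff:
  assumes "open D" "smooth_on2 D a" "smooth_on2 D b"
  shows "smooth_on2 D (\<lambda>u v. a u v - b u v :: real)"
proof -
  have "smooth_on2 D (\<lambda>u v. a u v + - b u v)"
    by (intro smooth_on2_add smooth_on2_uminus assms)
  then show ?thesis by simp
qed

lemma smooth_on2_scaleR:
  "open D \<Longrightarrow> smooth_on2 D a \<Longrightarrow> smooth_on2 D b \<Longrightarrow> smooth_on2 D (\<lambda>u v. a u v *\<^sub>R b u v)"
  unfolding smooth_on2_def using Ck_on_scaleR by blast

lemma smooth_on2_inner:
  "open D \<Longrightarrow> smooth_on2 D a \<Longrightarrow> smooth_on2 D b
    \<Longrightarrow> smooth_on2 D (\<lambda>u v. inner (a u v) (b u v :: 'a::real_inner))"
  unfolding smooth_on2_def using Ck_on_inner by blast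

lemma smooth_on2_cross3:
  "open D \<Longrightarrow> smooth_on2 D a \<Longrightarrow> smooth_on2 D b \<Longrightarrow> smooth_on2 D (\<lambda>u v. cross3 (a u v) (b u v))"
  unfolding smooth_on2_def using Ck_on_cross3 by blast

lemma smooth_on2_inverse:
  "open D \<Longrightarrow> smooth_on2 D h \<Longrightarrow> \<forall>(u,v)\<in>D. h u v \<noteq> 0 \<Longrightarrow> smooth_on2 D (\<lambda>u v. inverse (h u v) :: real)"
  unfolding smooth_on2_def using Ck_on_inverse by blast

lemma smooth_on2_divide:
  "open D \<Longrightarrow> smooth_on2 D a \<Longrightarrow> smooth_on2 D h \<Longrightarrow> \<forall>(u,v)\<in>D. h u v \<noteq> 0
    \<Longrightarrow> smooth_on2 D (\<lambda>u v. a u v / h u v :: real)"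
  by (simp add: smooth_on2_def Ck_on_divide)

lemma smooth_on2_sqrt:
  "open D \<Longrightarrow> smooth_on2 D h \<Longrightarrow> \<forall>(u,v)\<in>D. h u v > 0 \<Longrightarrow> smooth_on2 D (\<lambda>u v. sqrt (h u v))"
  by (simp add: smooth_on2_def Ck_on_sqrt)

lemma smooth_on2_ln:
  "open D \<Longrightarrow> smooth_on2 D h \<Longrightarrow> \<forall>(u,v)\<in>D. h u v > 0 \<Longrightarrow> smooth_on2 D (\<lambda>u v. ln (h u v) :: real)"
  by (simp add: smooth_on2_def Ck_on_ln)

lemma smooth_on2_exp: "open D \<Longrightarrow> smooth_on2 D h \<Longrightarrow> smooth_on2 D (\<lambda>u v. exp (h u v) :: real)"
  by (simp add: smooth_on2_def Ck_on_exp)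

lemma smooth_on2_compose_separate:
  "open U \<Longrightarrow> open V \<Longrightarrow> smooth_on2 U g \<Longrightarrow> smooth_on2 V (\<lambda>s t. a s) \<Longrightarrow> smooth_on2 V (\<lambda>s t. b t)
    \<Longrightarrow> \<forall>(s,t)\<in>V. (a s, b t) \<in> U \<Longrightarrow> smooth_on2 V (\<lambda>s t. g (a s) (b t))"
  by (simp add: smooth_on2_def Ck_on_compose_separate)

lemma pu_inner:
  assumes "smooth_on2 D a" "smooth_on2 D b" "(u,v) \<in> D"
  shows "pu (\<lambda>u v. inner (a u v) (b u v :: 'a::real_inner)) u v
    = inner (a u v) (pu b u v) + inner (pu a u v) (b u v)"
  by (rule pu_eqI, rule bounded_bilinear.has_vector_derivative[OF bounded_bilinear_inner])
    (use smooth_on2_has_pu assms in auto)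

lemma pv_inner:
  assumes "smooth_on2 D a" "smooth_on2 D b" "(u,v) \<in> D"
  shows "pv (\<lambda>u v. inner (a u v) (b u v :: 'a::real_inner)) u v
    = inner (a u v) (pv b u v) + inner (pv a u v) (b u v)"
  by (rule pv_eqI, rule bounded_bilinear.has_vector_derivative[OF bounded_bilinear_inner])
    (use smooth_on2_has_pv assms in auto)

lemma pu_divide:
  fixes a b :: "real \<Rightarrow> real \<Rightarrow> real"
  assumes "smooth_on2 D a" "smooth_on2 D b" "(u,v) \<in> D" "b u v \<noteq> 0"
  shows "pu (\<lambda>u v. a u v / b u v) u v = (pu a u v * b u v - a u v * pu b u v) / (b u v * b u v)"
  by (rule pu_eqI)
    (use DERIV_divide[OF smooth_on2_has_real_pu[OF assms(1,3)] smooth_on2_has_real_pu[OF assms(2,3)] assms(4)]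
      in \<open>simp add: has_real_derivative_iff_has_vector_derivative\<close>)

lemma pv_divide:
  fixes a b :: "real \<Rightarrow> real \<Rightarrow> real"
  assumes "smooth_on2 D a" "smooth_on2 D b" "(u,v) \<in> D" "b u v \<noteq> 0"
  shows "pv (\<lambda>u v. a u v / b u v) u v = (pv a u v * b u v - a u v * pv b u v) / (b u v * b u v)"
  by (rule pv_eqI)
    (use DERIV_divide[OF smooth_on2_has_real_pv[OF assms(1,3)] smooth_on2_has_real_pv[OF assms(2,3)] assms(4)]
      in \<open>simp add: has_real_derivative_iff_has_vector_derivative\<close>)

section \<open>Symmetry of mixed partial derivatives\<close>

lemma dist_Pair_le_abs_sum: "dist (s,t) (u,v) \<le> \<bar>s - u\<bar> + \<bar>t - v\<bar>"
  using sqrt_sum_squares_le_sum_abs[of "s - u" "t - v"] by (simp add: dist_Pair_Pair dist_real_def)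

lemma second_difference_eq_pv_pu:
  fixes F :: "real \<Rightarrow> real \<Rightarrow> real"
  assumes "Ck_on 2 D F" "h > 0"
    and square: "\<And>s t. u \<le> s \<Longrightarrow> s \<le> u + h \<Longrightarrow> v \<le> t \<Longrightarrow> t \<le> v + h \<Longrightarrow> (s,t) \<in> D"
  obtains \<xi> \<eta> where "u < \<xi>" "\<xi> < u + h" "v < \<eta>" "\<eta> < v + h"
    "F (u+h) (v+h) - F (u+h) v - F u (v+h) + F u v = h * h * pv (pu F) \<xi> \<eta>"
proof -
  have C2: "Ck_on (Suc (Suc 0)) D F" using assms(1) by (simp add: numeral_2_eq_2)
  note F = Ck_on_SucD[OF C2] and Fu = Ck_on_SucD[OF Ck_on_SucD(4)[OF C2]]
  have d1: "DERIV (\<lambda>s. F s (v+h) - F s v) s :> pu F s (v+h) - pu F s v" if "u \<le> s" "s \<le> u + h" for s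
    using F(2)[OF square[of s "v+h"]] F(2)[OF square[of s v]] that assms(2)
    by (auto simp flip: has_real_derivative_iff_has_vector_derivative intro!: DERIV_diff)
  then obtain \<xi> where \<xi>: "u < \<xi>" "\<xi> < u + h"
      "(F (u+h) (v+h) - F (u+h) v) - (F u (v+h) - F u v) = h * (pu F \<xi> (v+h) - pu F \<xi> v)"
    using MVT2[of u "u+h", OF _ d1] assms(2) by auto
  have d2: "DERIV (\<lambda>t. pu F \<xi> t) t :> pv (pu F) \<xi> t" if "v \<le> t" "t \<le> v + h" for t
    using Fu(3)[OF square[of \<xi> t]] that \<xi> by (auto simp: has_real_derivative_iff_has_vector_derivative)
  then obtain \<eta> where \<eta>: "v < \<eta>" "\<eta> < v + h" "pu F \<xi> (v+h) - pu F \<xi> v = h * pv (pu F) \<xi> \<eta>"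
    using MVT2[of v "v+h", OF _ d2] assms(2) by auto
  have "F (u+h) (v+h) - F (u+h) v - F u (v+h) + F u v = h * (pu F \<xi> (v+h) - pu F \<xi> v)"
    using \<xi>(3) by simp
  also have "\<dots> = h * h * pv (pu F) \<xi> \<eta>" using \<eta>(3) by simp
  finally have "F (u+h) (v+h) - F (u+h) v - F u (v+h) + F u v = h * h * pv (pu F) \<xi> \<eta>" .
  with \<xi>(1,2) \<eta>(1,2) show ?thesis by (rule that)
qed

lemma second_difference_eq_pu_pv:
  fixes F :: "real \<Rightarrow> real \<Rightarrow> real"
  assumes "Ck_on 2 D F" "h > 0"
    and square: "\<And>s t. u \<le> s \<Longrightarrow> s \<le> u + h \<Longrightarrow> v \<le> t \<Longrightarrow> t \<le> v + h \<Longrightarrow> (s,t) \<in> D"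
  obtains \<xi> \<eta> where "u < \<xi>" "\<xi> < u + h" "v < \<eta>" "\<eta> < v + h"
    "F (u+h) (v+h) - F (u+h) v - F u (v+h) + F u v = h * h * pu (pv F) \<xi> \<eta>"
proof -
  have C2: "Ck_on (Suc (Suc 0)) D F" using assms(1) by (simp add: numeral_2_eq_2)
  note F = Ck_on_SucD[OF C2] and Fv = Ck_on_SucD[OF Ck_on_SucD(5)[OF C2]]
  have d1: "DERIV (\<lambda>t. F (u+h) t - F u t) t :> pv F (u+h) t - pv F u t" if "v \<le> t" "t \<le> v + h" for t
    using F(3)[OF square[of "u+h" t]] F(3)[OF square[of u t]] that assms(2)
    by (auto simp flip: has_real_derivative_iff_has_vector_derivative intro!: DERIV_diff)
  then obtain \<eta> where \<eta>: "v < \<eta>" "\<eta> < v + h"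
      "(F (u+h) (v+h) - F u (v+h)) - (F (u+h) v - F u v) = h * (pv F (u+h) \<eta> - pv F u \<eta>)"
    using MVT2[of v "v+h", OF _ d1] assms(2) by auto
  have d2: "DERIV (\<lambda>s. pv F s \<eta>) s :> pu (pv F) s \<eta>" if "u \<le> s" "s \<le> u + h" for s
    using Fv(2)[OF square[of s \<eta>]] that \<eta> by (auto simp: has_real_derivative_iff_has_vector_derivative)
  then obtain \<xi> where \<xi>: "u < \<xi>" "\<xi> < u + h" "pv F (u+h) \<eta> - pv F u \<eta> = h * pu (pv F) \<xi> \<eta>"
    using MVT2[of u "u+h", OF _ d2] assms(2) by auto
  have "F (u+h) (v+h) - F (u+h) v - F u (v+h) + F u v = h * (pv F (u+h) \<eta> - pv F u \<eta>)"
    using \<eta>(3) by simp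
  also have "\<dots> = h * h * pu (pv F) \<xi> \<eta>" using \<xi>(3) by simp
  finally have "F (u+h) (v+h) - F (u+h) v - F u (v+h) + F u v = h * h * pu (pv F) \<xi> \<eta>" .
  with \<xi>(1,2) \<eta>(1,2) show ?thesis by (rule that)
qed

text \<open>Schwarz's theorem: both mixed partials are limits of the same second difference
  quotient, by the two mean value expansions above.\<close>

lemma pv_pu_eq_pu_pv_real:
  fixes F :: "real \<Rightarrow> real \<Rightarrow> real"
  assumes "open D" "Ck_on 2 D F" "(u,v) \<in> D"
  shows "pv (pu F) u v = pu (pv F) u v"
proof (rule ccontr)
  define A B where "A = pv (pu F) u v" and "B = pu (pv F) u v"
  define e where "e = \<bar>A - B\<bar> / 3"
  assume "pv (pu F) u v \<noteq> pu (pv F) u v"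
  then have e: "e > 0" by (simp add: e_def A_def B_def)
  have C2: "Ck_on (Suc (Suc 0)) D F" using assms(2) by (simp add: numeral_2_eq_2)
  have cont1: "continuous_on D (\<lambda>(s,t). pv (pu F) s t)"
    using Ck_on_SucD(5)[OF Ck_on_SucD(4)[OF C2]] by (simp add: Ck_on_continuous)
  obtain d1 where d1: "d1 > 0"
      "\<And>z. z \<in> D \<Longrightarrow> dist z (u,v) < d1 \<Longrightarrow> dist ((\<lambda>(s,t). pv (pu F) s t) z) A < e"
    using cont1[unfolded continuous_on_iff] assms(3) e unfolding A_def by fastforce
  have cont2: "continuous_on D (\<lambda>(s,t). pu (pv F) s t)"
    using Ck_on_SucD(4)[OF Ck_on_SucD(5)[OF C2]] by (simp add: Ck_on_continuous)
  obtain d2 where d2: "d2 > 0"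
      "\<And>z. z \<in> D \<Longrightarrow> dist z (u,v) < d2 \<Longrightarrow> dist ((\<lambda>(s,t). pu (pv F) s t) z) B < e"
    using cont2[unfolded continuous_on_iff] assms(3) e unfolding B_def by fastforce
  obtain r where r: "r > 0" "ball (u,v) r \<subseteq> D" using assms(1,3) openE by blast
  define h where "h = min r (min d1 d2) / 4"
  have h: "h > 0" "2*h < r" "2*h < d1" "2*h < d2" using r d1 d2 by (auto simp: h_def)
  have near: "(s,t) \<in> D" "dist (s,t) (u,v) < d1" "dist (s,t) (u,v) < d2"
    if "u \<le> s" "s \<le> u + h" "v \<le> t" "t \<le> v + h" for s t
  proof -
    have "dist (s,t) (u,v) \<le> 2*h" using dist_Pair_le_abs_sum[of s t u v] that by auto
    then show "dist (s,t) (u,v) < d1" "dist (s,t) (u,v) < d2" "(s,t) \<in> D"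
      using h r by (auto simp: dist_commute)
  qed
  obtain \<xi> \<eta> where \<xi>\<eta>: "u < \<xi>" "\<xi> < u + h" "v < \<eta>" "\<eta> < v + h"
      "F (u+h) (v+h) - F (u+h) v - F u (v+h) + F u v = h * h * pv (pu F) \<xi> \<eta>"
    using second_difference_eq_pv_pu[OF assms(2) h(1) near(1)] by blast
  obtain \<xi>' \<eta>' where \<xi>'\<eta>': "u < \<xi>'" "\<xi>' < u + h" "v < \<eta>'" "\<eta>' < v + h"
      "F (u+h) (v+h) - F (u+h) v - F u (v+h) + F u v = h * h * pu (pv F) \<xi>' \<eta>'"
    using second_difference_eq_pu_pv[OF assms(2) h(1) near(1)] by blast
  have eq: "pv (pu F) \<xi> \<eta> = pu (pv F) \<xi>' \<eta>'" using \<xi>\<eta>(5) \<xi>'\<eta>'(5) h(1) by simp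
  have "dist (pv (pu F) \<xi> \<eta>) A < e" using d1(2)[of "(\<xi>,\<eta>)"] near[of \<xi> \<eta>] \<xi>\<eta> by auto
  moreover have "dist (pu (pv F) \<xi>' \<eta>') B < e"
    using d2(2)[of "(\<xi>',\<eta>')"] near[of \<xi>' \<eta>'] \<xi>'\<eta>' by auto
  ultimately have "\<bar>A - B\<bar> < 2 * e" using eq by (simp add: dist_real_def)
  then show False using e by (simp add: e_def)
qed

lemma pu_inner_left:
  "((\<lambda>s. X s v) has_vector_derivative pu X u v) (at u) \<Longrightarrow> pu (\<lambda>u v. inner w (X u v)) u v = inner w (pu X u v)"
  by (rule pu_eqI) (rule bounded_linear.has_vector_derivative[OF bounded_linear_inner_right])

lemma pv_inner_left:
  "((\<lambda>t. X u t) has_vector_derivative pv X u v) (at v) \<Longrightarrow> pv (\<lambda>u v. inner w (X u v)) u v = inner w (pv X u v)"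
  by (rule pv_eqI) (rule bounded_linear.has_vector_derivative[OF bounded_linear_inner_right])

lemma pv_pu_eq_pu_pv:
  fixes X :: "real \<Rightarrow> real \<Rightarrow> 'a::real_inner"
  assumes "open D" "Ck_on 2 D X" "(u,v) \<in> D"
  shows "pv (pu X) u v = pu (pv X) u v"
proof -
  have C2: "Ck_on (Suc (Suc 0)) D X" using assms(2) by (simp add: numeral_2_eq_2)
  note X = Ck_on_SucD[OF C2]
  note Xu = Ck_on_SucD[OF X(4)] and Xv = Ck_on_SucD[OF X(5)]
  define w where "w = pv (pu X) u v - pu (pv X) u v"
  define F where "F = (\<lambda>u v. inner w (X u v))"
  have Fu: "\<forall>(s,t)\<in>D. pu F s t = inner w (pu X s t)" using X(2) pu_inner_left unfolding F_def by blast
  have Fv: "\<forall>(s,t)\<in>D. pv F s t = inner w (pv X s t)" using X(3) pv_inner_left unfolding F_def by blast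
  have "pv (pu F) u v = pv (\<lambda>s t. inner w (pu X s t)) u v" by (rule pv_cong[OF assms(1) Fu assms(3)])
  also have "\<dots> = inner w (pv (pu X) u v)" by (rule pv_inner_left[OF Xu(3)[OF assms(3)]])
  finally have uv: "pv (pu F) u v = inner w (pv (pu X) u v)" .
  have "pu (pv F) u v = pu (\<lambda>s t. inner w (pv X s t)) u v" by (rule pu_cong[OF assms(1) Fv assms(3)])
  also have "\<dots> = inner w (pu (pv X) u v)" by (rule pu_inner_left[OF Xv(2)[OF assms(3)]])
  finally have vu: "pu (pv F) u v = inner w (pu (pv X) u v)" .
  have F2: "Ck_on 2 D F" unfolding F_def by (rule Ck_on_inner[OF assms(1) Ck_on_const assms(2)])
  have "inner w w = 0"
    using pv_pu_eq_pu_pv_real[OF assms(1) F2 assms(3)] uv vu by (simp add: w_def inner_diff_right)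
  then show ?thesis by (simp add: w_def)
qed

lemma smooth_on2_pv_pu_eq_pu_pv:
  "open D \<Longrightarrow> smooth_on2 D (X :: real \<Rightarrow> real \<Rightarrow> 'a::real_inner) \<Longrightarrow> (u,v) \<in> D
    \<Longrightarrow> pv (pu X) u v = pu (pv X) u v"
  unfolding smooth_on2_def using pv_pu_eq_pu_pv by blast

section \<open>Surfaces in principal parameters\<close>

lemma orthogonal_frame_decomposition:
  fixes a b w :: "real^3"
  assumes ab: "inner a b = 0" and c: "cross3 a b \<noteq> 0"
    and n: "n = (1 / norm (cross3 a b)) *\<^sub>R cross3 a b"
  shows "w = (inner w a / inner a a) *\<^sub>R a + (inner w b / inner b b) *\<^sub>R b + inner w n *\<^sub>R n"
proof -
  have aa: "inner a a \<noteq> 0" "inner b b \<noteq> 0" using c by auto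
  have na: "inner n a = 0" "inner n b = 0" unfolding n
    by (simp_all add: dot_cross_self inner_commute)
  have nn: "inner n n = 1" unfolding n using c
    by (simp add: dot_square_norm power2_eq_square)
  define r where "r = w - (inner w a / inner a a) *\<^sub>R a - (inner w b / inner b b) *\<^sub>R b - inner w n *\<^sub>R n"
  have ra: "inner r a = 0" and rb: "inner r b = 0" and rn: "inner r n = 0"
    using aa ab na nn unfolding r_def by (simp_all add: inner_diff_left inner_diff_right inner_commute)
  have "cross3 r (cross3 a b) = 0" using ra rb
    by (simp add: Cross3.Lagrange inner_commute)
  then have "cross3 (cross3 a b) r = 0" by (metis cross_skew neg_equal_0_iff_equal)
  moreover have "inner (cross3 a b) r = 0" using rn c unfolding n
    by (simp add: inner_commute)
  ultimately have "r = 0" using cross_dot_cancel[of "cross3 a b" r 0] c by simp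
  then show ?thesis unfolding r_def by (simp add: algebra_simps)
qed

lemma inner_unit_normal_pu: "inner (unit_normal x u v) (pu x u v) = 0"
  by (simp add: unit_normal_def dot_cross_self inner_commute)

lemma inner_unit_normal_pv: "inner (unit_normal x u v) (pv x u v) = 0"
  by (simp add: unit_normal_def dot_cross_self inner_commute)

lemma inner_unit_normal_self:
  "cross3 (pu x u v) (pv x u v) \<noteq> 0 \<Longrightarrow> inner (unit_normal x u v) (unit_normal x u v) = 1"
  by (simp add: unit_normal_def dot_square_norm power2_eq_square)

locale principal_surface =
  fixes D :: "(real \<times> real) set" and x :: surf
  assumes regular: "regular_surface D x" and principal: "principal_params D x"
begin

lemma open_domain: "open D"
  using regular by (simp add: regular_surface_def)

lemma smooth_x: "smooth_on2 D x"
  using regular by (simp add: regular_surface_def)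

lemma cross_nonzero: "(u,v) \<in> D \<Longrightarrow> cross3 (pu x u v) (pv x u v) \<noteq> 0"
  using regular by (auto simp: regular_surface_def)

lemma F_eq_0: "\<forall>(u,v)\<in>D. fF x u v = 0"
  using principal by (auto simp: principal_params_def)

lemma M_eq_0: "\<forall>(u,v)\<in>D. fM x u v = 0"
  using principal by (auto simp: principal_params_def)

lemma E_pos: "(u,v) \<in> D \<Longrightarrow> fE x u v > 0"
  using cross_nonzero[of u v] by (auto simp: fE_def)

lemma G_pos: "(u,v) \<in> D \<Longrightarrow> fG x u v > 0"
  using cross_nonzero[of u v] by (auto simp: fG_def)

lemmas smooth_xu = smooth_on2_pu[OF smooth_x]
  and smooth_xv = smooth_on2_pv[OF smooth_x]
  and smooth_xuu = smooth_on2_pu[OF smooth_on2_pu[OF smooth_x]]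
  and smooth_xuv = smooth_on2_pv[OF smooth_on2_pu[OF smooth_x]]
  and smooth_xvv = smooth_on2_pv[OF smooth_on2_pv[OF smooth_x]]

lemma smooth_E: "smooth_on2 D (fE x)"
  unfolding fE_def[of x, abs_def] by (rule smooth_on2_inner[OF open_domain smooth_xu smooth_xu])

lemma smooth_G: "smooth_on2 D (fG x)"
  unfolding fG_def[of x, abs_def] by (rule smooth_on2_inner[OF open_domain smooth_xv smooth_xv])

lemma smooth_unit_normal: "smooth_on2 D (unit_normal x)"
proof -
  have c: "smooth_on2 D (\<lambda>u v. cross3 (pu x u v) (pv x u v))"
    by (rule smooth_on2_cross3[OF open_domain smooth_xu smooth_xv])
  have "smooth_on2 D (\<lambda>u v. inverse (sqrt (inner (cross3 (pu x u v) (pv x u v)) (cross3 (pu x u v) (pv x u v))))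
    *\<^sub>R cross3 (pu x u v) (pv x u v))"
    using cross_nonzero
    by (intro smooth_on2_scaleR[OF open_domain _ c] smooth_on2_inverse[OF open_domain]
        smooth_on2_sqrt[OF open_domain] smooth_on2_inner[OF open_domain c c]) auto
  then show ?thesis
    by (simp add: unit_normal_def[of x, abs_def] norm_eq_sqrt_inner divide_inverse)
qed

lemma smooth_L: "smooth_on2 D (fL x)"
  unfolding fL_def[of x, abs_def] by (rule smooth_on2_inner[OF open_domain smooth_xuu smooth_unit_normal])

lemma smooth_N: "smooth_on2 D (fN x)"
  unfolding fN_def[of x, abs_def] by (rule smooth_on2_inner[OF open_domain smooth_xvv smooth_unit_normal])

lemma smooth_nu1: "smooth_on2 D (nu1 x)"
  unfolding nu1_def[of x, abs_def]
  by (rule smooth_on2_divide[OF open_domain smooth_L smooth_E]) (use E_pos in force)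

lemma smooth_nu2: "smooth_on2 D (nu2 x)"
  unfolding nu2_def[of x, abs_def]
  by (rule smooth_on2_divide[OF open_domain smooth_N smooth_G]) (use G_pos in force)

lemma pu_pv_x: "(u,v) \<in> D \<Longrightarrow> pu (pv x) u v = pv (pu x) u v"
  using smooth_on2_pv_pu_eq_pu_pv[OF open_domain smooth_x] by simp

lemma frame_decomposition:
  assumes "(u,v) \<in> D"
  shows "w = (inner w (pu x u v) / fE x u v) *\<^sub>R pu x u v + (inner w (pv x u v) / fG x u v) *\<^sub>R pv x u v
    + inner w (unit_normal x u v) *\<^sub>R unit_normal x u v"
  using orthogonal_frame_decomposition[OF _ cross_nonzero[OF assms] unit_normal_def] F_eq_0 assms
  by (auto simp: fE_def fG_def fF_def)

end

context principal_surface
begin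

lemma pu_inner_unit_normal_self: "(u,v) \<in> D \<Longrightarrow> inner (pu (unit_normal x) u v) (unit_normal x u v) = 0"
  and pv_inner_unit_normal_self: "(u,v) \<in> D \<Longrightarrow> inner (pv (unit_normal x) u v) (unit_normal x u v) = 0"
proof -
  assume p: "(u,v) \<in> D"
  have n: "\<forall>(u,v)\<in>D. inner (unit_normal x u v) (unit_normal x u v) = 1"
    using cross_nonzero inner_unit_normal_self by blast
  show "inner (pu (unit_normal x) u v) (unit_normal x u v) = 0"
    using pu_eq_0_if_constant[OF open_domain n p] pu_inner[OF smooth_unit_normal smooth_unit_normal p]
    by (simp add: inner_commute)
  show "inner (pv (unit_normal x) u v) (unit_normal x u v) = 0"
    using pv_eq_0_if_constant[OF open_domain n p] pv_inner[OF smooth_unit_normal smooth_unit_normal p]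
    by (simp add: inner_commute)
qed

lemma pu_inner_unit_normal_pu: "(u,v) \<in> D \<Longrightarrow> inner (pu (unit_normal x) u v) (pu x u v) = - fL x u v"
  and pu_inner_unit_normal_pv: "(u,v) \<in> D \<Longrightarrow> inner (pu (unit_normal x) u v) (pv x u v) = - fM x u v"
  and pv_inner_unit_normal_pu: "(u,v) \<in> D \<Longrightarrow> inner (pv (unit_normal x) u v) (pu x u v) = - fM x u v"
  and pv_inner_unit_normal_pv: "(u,v) \<in> D \<Longrightarrow> inner (pv (unit_normal x) u v) (pv x u v) = - fN x u v"
proof -
  assume p: "(u,v) \<in> D"
  have "\<forall>(u,v)\<in>D. inner (unit_normal x u v) (pu x u v) = 0"
    by (simp add: inner_unit_normal_pu)
  from pu_eq_0_if_constant[OF open_domain this p] pv_eq_0_if_constant[OF open_domain this p]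
  have u: "pu (\<lambda>u v. inner (unit_normal x u v) (pu x u v)) u v = 0"
    and v: "pv (\<lambda>u v. inner (unit_normal x u v) (pu x u v)) u v = 0" .
  have "\<forall>(u,v)\<in>D. inner (unit_normal x u v) (pv x u v) = 0"
    by (simp add: inner_unit_normal_pv)
  from pu_eq_0_if_constant[OF open_domain this p] pv_eq_0_if_constant[OF open_domain this p]
  have u': "pu (\<lambda>u v. inner (unit_normal x u v) (pv x u v)) u v = 0"
    and v': "pv (\<lambda>u v. inner (unit_normal x u v) (pv x u v)) u v = 0" .
  show "inner (pu (unit_normal x) u v) (pu x u v) = - fL x u v"
    using u pu_inner[OF smooth_unit_normal smooth_xu p]
    by (simp add: fL_def inner_commute eq_neg_iff_add_eq_0)
  show "inner (pu (unit_normal x) u v) (pv x u v) = - fM x u v"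
    using u' pu_inner[OF smooth_unit_normal smooth_xv p] pu_pv_x[OF p]
    by (simp add: fM_def inner_commute eq_neg_iff_add_eq_0)
  show "inner (pv (unit_normal x) u v) (pu x u v) = - fM x u v"
    using v pv_inner[OF smooth_unit_normal smooth_xu p]
    by (simp add: fM_def inner_commute eq_neg_iff_add_eq_0)
  show "inner (pv (unit_normal x) u v) (pv x u v) = - fN x u v"
    using v' pv_inner[OF smooth_unit_normal smooth_xv p]
    by (simp add: fN_def inner_commute eq_neg_iff_add_eq_0)
qed

lemma rodrigues_u: "(u,v) \<in> D \<Longrightarrow> pu (unit_normal x) u v = - nu1 x u v *\<^sub>R pu x u v"
  using frame_decomposition[of u v "pu (unit_normal x) u v"] M_eq_0
  by (auto simp: nu1_def pu_inner_unit_normal_self pu_inner_unit_normal_pu pu_inner_unit_normal_pv)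

lemma rodrigues_v: "(u,v) \<in> D \<Longrightarrow> pv (unit_normal x) u v = - nu2 x u v *\<^sub>R pv x u v"
  using frame_decomposition[of u v "pv (unit_normal x) u v"] M_eq_0
  by (auto simp: nu2_def pv_inner_unit_normal_self pv_inner_unit_normal_pu pv_inner_unit_normal_pv)

end

context principal_surface
begin

lemma codazzi_L_v:
  assumes p: "(u,v) \<in> D"
  shows "pv (fL x) u v = (nu1 x u v + nu2 x u v) * pv (fE x) u v / 2"
proof -
  have E_v: "pv (fE x) u v = 2 * inner (pu x u v) (pv (pu x) u v)"
    using pv_inner[OF smooth_xu smooth_xu p] unfolding fE_def[of x, abs_def] by (simp add: inner_commute)
  have "pu (fF x) u v = 0" by (rule pu_eq_0_if_constant[OF open_domain F_eq_0 p])
  then have xuu_xv: "inner (pu (pu x) u v) (pv x u v) = - inner (pu x u v) (pv (pu x) u v)"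
    using pu_inner[OF smooth_xu smooth_xv p] pu_pv_x[OF p] unfolding fF_def[of x, abs_def]
    by (simp add: inner_commute eq_neg_iff_add_eq_0 add.commute)
  have "pu (fM x) u v = 0" by (rule pu_eq_0_if_constant[OF open_domain M_eq_0 p])
  then have xuvu_n: "inner (pu (pv (pu x)) u v) (unit_normal x u v)
      = nu1 x u v * inner (pu x u v) (pv (pu x) u v)"
    using pu_inner[OF smooth_xuv smooth_unit_normal p] rodrigues_u[OF p] unfolding fM_def[of x, abs_def]
    by (simp add: inner_commute eq_neg_iff_add_eq_0)
  have "pv (pu (pu x)) u v = pu (pv (pu x)) u v"
    by (rule smooth_on2_pv_pu_eq_pu_pv[OF open_domain smooth_xu p])
  then show ?thesis
    using pv_inner[OF smooth_xuu smooth_unit_normal p] rodrigues_v[OF p] xuu_xv xuvu_n E_v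
    unfolding fL_def[of x, abs_def] by (simp add: inner_commute algebra_simps)
qed

lemma codazzi_N_u:
  assumes p: "(u,v) \<in> D"
  shows "pu (fN x) u v = (nu1 x u v + nu2 x u v) * pu (fG x) u v / 2"
proof -
  have G_u: "pu (fG x) u v = 2 * inner (pv x u v) (pv (pu x) u v)"
    using pu_inner[OF smooth_xv smooth_xv p] pu_pv_x[OF p] unfolding fG_def[of x, abs_def]
    by (simp add: inner_commute)
  have "pv (fF x) u v = 0" by (rule pv_eq_0_if_constant[OF open_domain F_eq_0 p])
  then have xvv_xu: "inner (pv (pv x) u v) (pu x u v) = - inner (pv x u v) (pv (pu x) u v)"
    using pv_inner[OF smooth_xu smooth_xv p] unfolding fF_def[of x, abs_def]
    by (simp add: inner_commute eq_neg_iff_add_eq_0)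
  have "pv (fM x) u v = 0" by (rule pv_eq_0_if_constant[OF open_domain M_eq_0 p])
  then have xuvv_n: "inner (pv (pv (pu x)) u v) (unit_normal x u v)
      = nu2 x u v * inner (pv x u v) (pv (pu x) u v)"
    using pv_inner[OF smooth_xuv smooth_unit_normal p] rodrigues_v[OF p] unfolding fM_def[of x, abs_def]
    by (simp add: inner_commute eq_neg_iff_add_eq_0)
  have "pu (pv (pv x)) u v = pv (pu (pv x)) u v"
    by (rule smooth_on2_pv_pu_eq_pu_pv[OF open_domain smooth_xv p, symmetric])
  also have "\<dots> = pv (pv (pu x)) u v"
    by (rule pv_cong[OF open_domain _ p]) (use pu_pv_x in auto)
  finally show ?thesis
    using pu_inner[OF smooth_xvv smooth_unit_normal p] rodrigues_u[OF p] xvv_xu xuvv_n G_u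
    unfolding fN_def[of x, abs_def] by (simp add: inner_commute algebra_simps)
qed

lemma codazzi_nu1_v:
  assumes p: "(u,v) \<in> D"
  shows "pv (nu1 x) u v = (nu2 x u v - nu1 x u v) * pv (fE x) u v / (2 * fE x u v)"
proof -
  have E: "fE x u v \<noteq> 0" using E_pos[OF p] by simp
  have "nu1 x = (\<lambda>u v. fL x u v / fE x u v)" by (simp add: fun_eq_iff nu1_def)
  then have "pv (nu1 x) u v = (pv (fL x) u v * fE x u v - fL x u v * pv (fE x) u v) / (fE x u v * fE x u v)"
    using pv_divide[OF smooth_L smooth_E p E] by simp
  also have "\<dots> = (nu2 x u v - nu1 x u v) * pv (fE x) u v / (2 * fE x u v)"
    using E by (simp add: codazzi_L_v[OF p] nu1_def field_simps)
  finally show ?thesis .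
qed

lemma codazzi_nu2_u:
  assumes p: "(u,v) \<in> D"
  shows "pu (nu2 x) u v = (nu1 x u v - nu2 x u v) * pu (fG x) u v / (2 * fG x u v)"
proof -
  have G: "fG x u v \<noteq> 0" using G_pos[OF p] by simp
  have "nu2 x = (\<lambda>u v. fN x u v / fG x u v)" by (simp add: fun_eq_iff nu2_def)
  then have "pu (nu2 x) u v = (pu (fN x) u v * fG x u v - fN x u v * pu (fG x) u v) / (fG x u v * fG x u v)"
    using pu_divide[OF smooth_N smooth_G p G] by simp
  also have "\<dots> = (nu1 x u v - nu2 x u v) * pu (fG x) u v / (2 * fG x u v)"
    using G by (simp add: codazzi_N_u[OF p] nu2_def field_simps)
  finally show ?thesis .
qed

end

section \<open>Weingarten surfaces\<close>

lemma has_real_derivative_ln_sqrt: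
  assumes "(h has_real_derivative d) (at t)" "h t > 0"
  shows "((\<lambda>t. ln (sqrt (h t))) has_real_derivative d / (2 * h t)) (at t)"
proof -
  have "((\<lambda>t. ln (sqrt (h t))) has_real_derivative inverse (sqrt (h t)) * (inverse (sqrt (h t)) / 2 * d)) (at t)"
    using assms by (intro DERIV_chain2[OF DERIV_ln] DERIV_chain2[OF DERIV_real_sqrt]) auto
  moreover have "inverse (sqrt (h t)) * (inverse (sqrt (h t)) / 2 * d) = d / (2 * h t)"
    using assms(2) by (simp add: field_simps)
  ultimately show ?thesis by (metis (no_types))
qed

locale weingarten_surface = principal_surface +
  fixes I :: "real set" and f g Phi Psi :: "real \<Rightarrow> real" and nu :: "real \<Rightarrow> real \<Rightarrow> real"
  assumes strongly_regular: "strongly_regular D x"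
    and weingarten: "weingarten_data D x I f g nu"
    and Phi_deriv: "\<forall>t\<in>I. (Phi has_real_derivative (deriv f t / (f t - g t))) (at t)"
    and Psi_deriv: "\<forall>t\<in>I. (Psi has_real_derivative (deriv g t / (g t - f t))) (at t)"
begin

lemma nu_in_I: "(u,v) \<in> D \<Longrightarrow> nu u v \<in> I"
  and nu1_eq_f: "(u,v) \<in> D \<Longrightarrow> nu1 x u v = f (nu u v)"
  and nu2_eq_g: "(u,v) \<in> D \<Longrightarrow> nu2 x u v = g (nu u v)"
  and pu_nu_pv_nu_nonzero: "(u,v) \<in> D \<Longrightarrow> pu nu u v * pv nu u v \<noteq> 0"
  using weingarten by (auto simp: weingarten_data_def)

lemma f_deriv: "t \<in> I \<Longrightarrow> (f has_real_derivative deriv f t) (at t)"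
  and g_deriv: "t \<in> I \<Longrightarrow> (g has_real_derivative deriv g t) (at t)"
  using weingarten DERIV_deriv_iff_real_differentiable by (auto simp: weingarten_data_def)

lemma nu1_gt_nu2: "(u,v) \<in> D \<Longrightarrow> nu1 x u v > nu2 x u v"
  using strongly_regular by (auto simp: strongly_regular_def)

lemma nu_differentiable: "(u,v) \<in> D \<Longrightarrow> (\<lambda>(u,v). nu u v) differentiable (at (u,v))"
  using weingarten at_within_open[OF _ open_domain]
  by (fastforce simp: weingarten_data_def differentiable_on_def)

lemma has_real_pu_nu: "(u,v) \<in> D \<Longrightarrow> ((\<lambda>s. nu s v) has_real_derivative pu nu u v) (at u)"
proof -
  assume p: "(u,v) \<in> D"
  have "((\<lambda>(u,v). nu u v) \<circ> (\<lambda>s. (s,v))) differentiable (at u)"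
    by (intro differentiable_chain_at nu_differentiable[OF p]) (simp add: differentiable_Pair)
  then have "(\<lambda>s. nu s v) differentiable (at u)" by (simp add: o_def)
  then show ?thesis
    unfolding pu_def has_real_derivative_iff_has_vector_derivative
    by (rule vector_derivative_works[THEN iffD1])
qed

lemma has_real_pv_nu: "(u,v) \<in> D \<Longrightarrow> ((\<lambda>t. nu u t) has_real_derivative pv nu u v) (at v)"
proof -
  assume p: "(u,v) \<in> D"
  have "((\<lambda>(u,v). nu u v) \<circ> (\<lambda>t. (u,t))) differentiable (at v)"
    by (intro differentiable_chain_at nu_differentiable[OF p]) (simp add: differentiable_Pair)
  then have "(\<lambda>t. nu u t) differentiable (at v)" by (simp add: o_def)
  then show ?thesis
    unfolding pv_def has_real_derivative_iff_has_vector_derivative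
    by (rule vector_derivative_works[THEN iffD1])
qed

lemma pu_nu1: "(u,v) \<in> D \<Longrightarrow> pu (nu1 x) u v = deriv f (nu u v) * pu nu u v"
  and pv_nu1: "(u,v) \<in> D \<Longrightarrow> pv (nu1 x) u v = deriv f (nu u v) * pv nu u v"
  and pu_nu2: "(u,v) \<in> D \<Longrightarrow> pu (nu2 x) u v = deriv g (nu u v) * pu nu u v"
  and pv_nu2: "(u,v) \<in> D \<Longrightarrow> pv (nu2 x) u v = deriv g (nu u v) * pv nu u v"
proof -
  assume p: "(u,v) \<in> D"
  have eq: "\<forall>(u,v)\<in>D. nu1 x u v = f (nu u v)" "\<forall>(u,v)\<in>D. nu2 x u v = g (nu u v)"
    using nu1_eq_f nu2_eq_g by auto
  note f = f_deriv[OF nu_in_I[OF p]] and g = g_deriv[OF nu_in_I[OF p]]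
  show "pu (nu1 x) u v = deriv f (nu u v) * pu nu u v"
    using pu_cong[OF open_domain eq(1) p] DERIV_chain2[OF f has_real_pu_nu[OF p]]
    by (simp add: pu_eqI has_real_derivative_iff_has_vector_derivative)
  show "pv (nu1 x) u v = deriv f (nu u v) * pv nu u v"
    using pv_cong[OF open_domain eq(1) p] DERIV_chain2[OF f has_real_pv_nu[OF p]]
    by (simp add: pv_eqI has_real_derivative_iff_has_vector_derivative)
  show "pu (nu2 x) u v = deriv g (nu u v) * pu nu u v"
    using pu_cong[OF open_domain eq(2) p] DERIV_chain2[OF g has_real_pu_nu[OF p]]
    by (simp add: pu_eqI has_real_derivative_iff_has_vector_derivative)
  show "pv (nu2 x) u v = deriv g (nu u v) * pv nu u v"
    using pv_cong[OF open_domain eq(2) p] DERIV_chain2[OF g has_real_pv_nu[OF p]]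
    by (simp add: pv_eqI has_real_derivative_iff_has_vector_derivative)
qed

text \<open>By \<open>nu1 = f \<circ> nu\<close>, \<open>nu2 = g \<circ> nu\<close>, \<open>Phi' = f' / (f - g)\<close> and \<open>Psi' = g' / (g - f)\<close>.\<close>

lemma Phi_nu_has_pu:
    "(u,v) \<in> D \<Longrightarrow> ((\<lambda>s. Phi (nu s v)) has_real_derivative pu (nu1 x) u v / (nu1 x u v - nu2 x u v)) (at u)"
  and Phi_nu_has_pv:
    "(u,v) \<in> D \<Longrightarrow> ((\<lambda>t. Phi (nu u t)) has_real_derivative pv (nu1 x) u v / (nu1 x u v - nu2 x u v)) (at v)"
  and Psi_nu_has_pu:
    "(u,v) \<in> D \<Longrightarrow> ((\<lambda>s. Psi (nu s v)) has_real_derivative pu (nu2 x) u v / (nu2 x u v - nu1 x u v)) (at u)"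
  and Psi_nu_has_pv:
    "(u,v) \<in> D \<Longrightarrow> ((\<lambda>t. Psi (nu u t)) has_real_derivative pv (nu2 x) u v / (nu2 x u v - nu1 x u v)) (at v)"
proof -
  assume p: "(u,v) \<in> D"
  note Phi = Phi_deriv[rule_format, OF nu_in_I[OF p]] and Psi = Psi_deriv[rule_format, OF nu_in_I[OF p]]
  note eqs = nu1_eq_f[OF p] nu2_eq_g[OF p]
  show "((\<lambda>s. Phi (nu s v)) has_real_derivative pu (nu1 x) u v / (nu1 x u v - nu2 x u v)) (at u)"
    using DERIV_chain2[OF Phi has_real_pu_nu[OF p]] by (simp add: pu_nu1[OF p] eqs)
  show "((\<lambda>t. Phi (nu u t)) has_real_derivative pv (nu1 x) u v / (nu1 x u v - nu2 x u v)) (at v)"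
    using DERIV_chain2[OF Phi has_real_pv_nu[OF p]] by (simp add: pv_nu1[OF p] eqs)
  show "((\<lambda>s. Psi (nu s v)) has_real_derivative pu (nu2 x) u v / (nu2 x u v - nu1 x u v)) (at u)"
    using DERIV_chain2[OF Psi has_real_pu_nu[OF p]] by (simp add: pu_nu2[OF p] eqs)
  show "((\<lambda>t. Psi (nu u t)) has_real_derivative pv (nu2 x) u v / (nu2 x u v - nu1 x u v)) (at v)"
    using DERIV_chain2[OF Psi has_real_pv_nu[OF p]] by (simp add: pv_nu2[OF p] eqs)
qed

lemma continuous_on_nu: "continuous_on D (\<lambda>(u,v). nu u v)"
  using weingarten differentiable_imp_continuous_on by (auto simp: weingarten_data_def)

lemma continuous_on_compose_nu:
  assumes "\<forall>t\<in>I. (\<phi> has_real_derivative \<phi>' t) (at t)"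
  shows "continuous_on D (\<lambda>(u,v). \<phi> (nu u v))"
proof -
  have "continuous_on I \<phi>"
    by (rule continuous_at_imp_continuous_on) (use assms DERIV_isCont in blast)
  then have "continuous_on D (\<lambda>z. \<phi> ((\<lambda>(u,v). nu u v) z))"
    by (rule continuous_on_compose2[OF _ continuous_on_nu]) (use nu_in_I in auto)
  then show ?thesis by (simp add: split_beta)
qed

lemma smooth_Phi_nu: "smooth_on2 D (\<lambda>u v. Phi (nu u v))"
proof -
  have gap: "\<forall>(u,v)\<in>D. nu1 x u v - nu2 x u v \<noteq> 0" using nu1_gt_nu2 by force
  show ?thesis
    by (rule smooth_on2_SucI[OF open_domain continuous_on_compose_nu[OF Phi_deriv],
          where fu="\<lambda>u v. pu (nu1 x) u v / (nu1 x u v - nu2 x u v)"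
          and fv="\<lambda>u v. pv (nu1 x) u v / (nu1 x u v - nu2 x u v)"])
      (use Phi_nu_has_pu Phi_nu_has_pv gap in \<open>auto simp: has_real_derivative_iff_has_vector_derivative
        intro!: smooth_on2_divide smooth_on2_diff open_domain smooth_nu1 smooth_nu2
        smooth_on2_pu smooth_on2_pv\<close>)
qed

lemma smooth_Psi_nu: "smooth_on2 D (\<lambda>u v. Psi (nu u v))"
proof -
  have gap: "\<forall>(u,v)\<in>D. nu2 x u v - nu1 x u v \<noteq> 0" using nu1_gt_nu2 by force
  show ?thesis
    by (rule smooth_on2_SucI[OF open_domain continuous_on_compose_nu[OF Psi_deriv],
          where fu="\<lambda>u v. pu (nu2 x) u v / (nu2 x u v - nu1 x u v)"
          and fv="\<lambda>u v. pv (nu2 x) u v / (nu2 x u v - nu1 x u v)"])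
      (use Psi_nu_has_pu Psi_nu_has_pv gap in \<open>auto simp: has_real_derivative_iff_has_vector_derivative
        intro!: smooth_on2_divide smooth_on2_diff open_domain smooth_nu1 smooth_nu2
        smooth_on2_pu smooth_on2_pv\<close>)
qed

lemma smooth_lam: "smooth_on2 D (lam x Phi nu)"
  unfolding lam_def[of x, abs_def] using E_pos
  by (intro smooth_on2_add[OF open_domain] smooth_on2_ln[OF open_domain] smooth_on2_sqrt[OF open_domain]
      smooth_E smooth_Phi_nu) auto

lemma smooth_mu: "smooth_on2 D (mu x Psi nu)"
  unfolding mu_def[of x, abs_def] using G_pos
  by (intro smooth_on2_add[OF open_domain] smooth_on2_ln[OF open_domain] smooth_on2_sqrt[OF open_domain]
      smooth_G smooth_Psi_nu) auto

text \<open>This is where the Codazzi equations enter: they make \<open>lam\<close> independent of \<open>v\<close>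
  and \<open>mu\<close> independent of \<open>u\<close>.\<close>

lemma lam_has_pv_0: "(u,v) \<in> D \<Longrightarrow> ((\<lambda>t. lam x Phi nu u t) has_real_derivative 0) (at v)"
proof -
  assume p: "(u,v) \<in> D"
  have "((\<lambda>t. ln (sqrt (fE x u t)) + Phi (nu u t)) has_real_derivative
      pv (fE x) u v / (2 * fE x u v) + pv (nu1 x) u v / (nu1 x u v - nu2 x u v)) (at v)"
    by (intro DERIV_add has_real_derivative_ln_sqrt smooth_on2_has_real_pv[OF smooth_E p]
        E_pos[OF p] Phi_nu_has_pv[OF p])
  moreover have "pv (fE x) u v / (2 * fE x u v) + pv (nu1 x) u v / (nu1 x u v - nu2 x u v) = 0"
    using codazzi_nu1_v[OF p] nu1_gt_nu2[OF p] E_pos[OF p] by (simp add: field_simps)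
  ultimately show ?thesis by (simp add: lam_def)
qed

lemma mu_has_pu_0: "(u,v) \<in> D \<Longrightarrow> ((\<lambda>s. mu x Psi nu s v) has_real_derivative 0) (at u)"
proof -
  assume p: "(u,v) \<in> D"
  have "((\<lambda>s. ln (sqrt (fG x s v)) + Psi (nu s v)) has_real_derivative
      pu (fG x) u v / (2 * fG x u v) + pu (nu2 x) u v / (nu2 x u v - nu1 x u v)) (at u)"
    by (intro DERIV_add has_real_derivative_ln_sqrt smooth_on2_has_real_pu[OF smooth_G p]
        G_pos[OF p] Psi_nu_has_pu[OF p])
  moreover have "pu (fG x) u v / (2 * fG x u v) + pu (nu2 x) u v / (nu2 x u v - nu1 x u v) = 0"
    using codazzi_nu2_u[OF p] nu1_gt_nu2[OF p] G_pos[OF p] by (simp add: field_simps)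
  ultimately show ?thesis by (simp add: mu_def)
qed

lemma lam_eq_on_vertical_segment:
  assumes "\<forall>t \<in> closed_segment v v'. (u,t) \<in> D"
  shows "lam x Phi nu u v = lam x Phi nu u v'"
proof -
  have "\<exists>c. \<forall>t \<in> closed_segment v v'. lam x Phi nu u t = c"
    using assms lam_has_pv_0
    by (intro has_field_derivative_zero_constant) (auto intro: has_field_derivative_at_within)
  then show ?thesis by auto
qed

lemma mu_eq_on_horizontal_segment:
  assumes "\<forall>s \<in> closed_segment u u'. (s,v) \<in> D"
  shows "mu x Psi nu u v = mu x Psi nu u' v"
proof -
  have "\<exists>c. \<forall>s \<in> closed_segment u u'. mu x Psi nu s v = c"
    using assms mu_has_pu_0
    by (intro has_field_derivative_zero_constant) (auto intro: has_field_derivative_at_within)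
  then show ?thesis by auto
qed

end

lemma exists_antiderivative_on_interval:
  fixes w :: "real \<Rightarrow> real"
  assumes "a0 < a" "b < b0" "continuous_on {a0..b0} w"
  obtains P where "\<And>u. u \<in> {a..b} \<Longrightarrow> (P has_real_derivative w u) (at u)"
proof -
  define P where "P u = integral {a0..u} w" for u
  have "(P has_real_derivative w u) (at u)" if "u \<in> {a..b}" for u
  proof -
    have u: "u \<in> {a0..b0}" using that assms(1,2) by simp
    have "u \<in> interior {a0..b0}" using that assms(1,2) by simp
    moreover have "(P has_real_derivative w u) (at u within {a0..b0})"
      unfolding P_def by (rule integral_has_real_derivative[OF assms(3) u])
    ultimately show ?thesis by (metis at_within_interior)
  qed
  then show ?thesis by (rule that)
qed

lemma increasing_function_inverse:
  fixes P w :: "real \<Rightarrow> real"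
  assumes ab: "a < b" and P: "\<And>u. u \<in> {a..b} \<Longrightarrow> (P has_real_derivative w u) (at u)"
    and w: "\<And>u. u \<in> {a..b} \<Longrightarrow> w u > 0"
  defines "p \<equiv> inv_into {a..b} P"
  shows "\<And>u. u \<in> {a<..<b} \<Longrightarrow> P u \<in> {P a<..<P b} \<and> p (P u) = u"
    and "\<And>s. s \<in> {P a<..<P b} \<Longrightarrow> p s \<in> {a<..<b} \<and> P (p s) = s \<and> (p has_real_derivative inverse (w (p s))) (at s)"
proof -
  have cont: "continuous_on {a..b} P"
    by (rule continuous_at_imp_continuous_on) (use P DERIV_isCont in blast)
  have mono: "P y < P z" if "y < z" "y \<in> {a..b}" "z \<in> {a..b}" for y z
  proof (rule DERIV_pos_imp_increasing_open[OF that(1)])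
    fix c assume "y < c" "c < z"
    then have c: "c \<in> {a..b}" using that by auto
    show "\<exists>d. DERIV P c :> d \<and> d > 0" using P[OF c] w[OF c] by blast
  next
    show "continuous_on {y..z} P" using cont that by (auto intro: continuous_on_subset)
  qed
  have inj: "inj_on P {a..b}"
  proof (rule inj_onI, rule ccontr)
    fix y z assume "y \<in> {a..b}" "z \<in> {a..b}" "P y = P z" "y \<noteq> z"
    then show False using mono[of y z] mono[of z y] by (auto simp: neq_iff)
  qed
  have pP: "p (P z) = z" if "z \<in> {a..b}" for z
    unfolding p_def using inv_into_f_f[OF inj that] .
  have onto: "\<exists>z. a \<le> z \<and> z \<le> b \<and> P z = y" if "P a \<le> y" "y \<le> P b" for y
    using IVT'[of P a y b, OF that _ cont] ab by auto
  show "P u \<in> {P a<..<P b} \<and> p (P u) = u" if "u \<in> {a<..<b}" for u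
    using mono[of a u] mono[of u b] that pP[of u] by auto
  fix s assume s: "s \<in> {P a<..<P b}"
  then obtain u where u: "a \<le> u" "u \<le> b" "P u = s" using onto[of s] by auto
  have u_open: "a < u" "u < b" using u s by (auto simp: le_less)
  have ps: "p s = u" using pP[of u] u by auto
  have "isCont P z" if "a \<le> z" "z \<le> b" for z using P[of z] that DERIV_isCont by auto
  then have "isCont p s"
    using isCont_inverse_function2[where a=a and x=u and b=b and f=P and g=p] u_open u pP by auto
  moreover have "DERIV P (p s) :> w (p s)" "w (p s) \<noteq> 0" using P[of u] w[of u] ps u by auto
  moreover have "P (p y) = y" if "P a < y" "y < P b" for y
    using onto[of y] that pP by fastforce
  ultimately have "(p has_real_derivative inverse (w (p s))) (at s)"
    using s by (intro DERIV_inverse_function[where a="P a" and b="P b"]) auto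
  then show "p s \<in> {a<..<b} \<and> P (p s) = s \<and> (p has_real_derivative inverse (w (p s))) (at s)"
    using ps u u_open by auto
qed

lemma continuous_on_fst_only:
  fixes V :: "(real \<times> real) set"
  assumes "\<forall>(s,t)\<in>V. isCont p s"
  shows "continuous_on V (\<lambda>(s,t). (p s :: real))"
proof (rule continuous_at_imp_continuous_on, rule ballI)
  fix z assume "z \<in> V"
  then have "isCont (p \<circ> fst) z" using assms by (intro continuous_at_compose) (auto intro: continuous_intros)
  moreover have "(\<lambda>(s,t::real). p s) = p \<circ> fst" by (auto simp: fun_eq_iff)
  ultimately show "isCont (\<lambda>(s,t::real). p s) z" by simp
qed

lemma continuous_on_snd_only:
  fixes V :: "(real \<times> real) set"
  assumes "\<forall>(s,t)\<in>V. isCont q t"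
  shows "continuous_on V (\<lambda>(s,t). (q t :: real))"
proof (rule continuous_at_imp_continuous_on, rule ballI)
  fix z assume "z \<in> V"
  then have "isCont (q \<circ> snd) z" using assms by (intro continuous_at_compose) (auto intro: continuous_intros)
  moreover have "(\<lambda>(s::real,t). q t) = q \<circ> snd" by (auto simp: fun_eq_iff)
  ultimately show "isCont (\<lambda>(s::real,t). q t) z" by simp
qed

lemma smooth_on2_antiderivative_fst:
  assumes "open U" "smooth_on2 U h" "\<forall>(u,v)\<in>U. (P has_real_derivative h u v) (at u)"
  shows "smooth_on2 U (\<lambda>u v. P u)"
proof (rule smooth_on2_SucI[OF assms(1) _ _ _ assms(2) smooth_on2_const[of U 0]])
  show "continuous_on U (\<lambda>(u,v). P u)"
    by (rule continuous_on_fst_only) (use assms(3) DERIV_isCont in blast)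
qed (use assms(3) in \<open>auto simp: has_real_derivative_iff_has_vector_derivative\<close>)

lemma smooth_on2_antiderivative_snd:
  assumes "open U" "smooth_on2 U h" "\<forall>(u,v)\<in>U. (Q has_real_derivative h u v) (at v)"
  shows "smooth_on2 U (\<lambda>u v. Q v)"
proof (rule smooth_on2_SucI[OF assms(1) _ _ _ smooth_on2_const[of U 0] assms(2)])
  show "continuous_on U (\<lambda>(u,v). Q v)"
    by (rule continuous_on_snd_only) (use assms(3) DERIV_isCont in blast)
qed (use assms(3) in \<open>auto simp: has_real_derivative_iff_has_vector_derivative\<close>)

text \<open>A solution of the autonomous equation \<open>p' = h(p, c)\<close> with smooth \<open>h\<close> is smooth: each
  order of differentiability of \<open>p\<close> gives one more for \<open>h(p, c)\<close>, hence for \<open>p'\<close>.\<close>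

lemma smooth_on2_ode_solution_fst:
  assumes oU: "open U" and oV: "open V" and h: "smooth_on2 U h" and m: "\<forall>(s,t)\<in>V. (p s, c) \<in> U"
    and d: "\<forall>(s,t)\<in>V. (p has_real_derivative h (p s) c) (at s)"
  shows "smooth_on2 V (\<lambda>s t. p s)"
  unfolding smooth_on2_def
proof
  have c: "continuous_on V (\<lambda>(s,t). p s)"
    by (rule continuous_on_fst_only) (use d DERIV_isCont in blast)
  fix k show "Ck_on k V (\<lambda>s t. p s)"
  proof (induction k)
    case 0
    then show ?case using c by simp
  next
    case (Suc k)
    show ?case
    proof (rule Ck_on_SucI_derivatives[OF oV c, where fu="\<lambda>s t. h (p s) c" and fv="\<lambda>s t. 0"])
      show "Ck_on k V (\<lambda>s t. h (p s) c)"
        by (rule Ck_on_compose_separate[OF oU oV smooth_on2_Ck_on[OF h] Suc.IH Ck_on_const m])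
    qed (use d in \<open>auto simp: has_real_derivative_iff_has_vector_derivative Ck_on_const\<close>)
  qed
qed

lemma smooth_on2_ode_solution_snd:
  assumes oU: "open U" and oV: "open V" and h: "smooth_on2 U h" and m: "\<forall>(s,t)\<in>V. (c, q t) \<in> U"
    and d: "\<forall>(s,t)\<in>V. (q has_real_derivative h c (q t)) (at t)"
  shows "smooth_on2 V (\<lambda>s t. q t)"
  unfolding smooth_on2_def
proof
  have c: "continuous_on V (\<lambda>(s,t). q t)"
    by (rule continuous_on_snd_only) (use d DERIV_isCont in blast)
  fix k show "Ck_on k V (\<lambda>s t. q t)"
  proof (induction k)
    case 0
    then show ?case using c by simp
  next
    case (Suc k)
    show ?case
    proof (rule Ck_on_SucI_derivatives[OF oV c, where fu="\<lambda>s t. 0" and fv="\<lambda>s t. h c (q t)"])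
      show "Ck_on k V (\<lambda>s t. h c (q t))"
        by (rule Ck_on_compose_separate[OF oU oV smooth_on2_Ck_on[OF h] Ck_on_const Suc.IH m])
    qed (use d in \<open>auto simp: has_real_derivative_iff_has_vector_derivative Ck_on_const\<close>)
  qed
qed

section \<open>Reparametrizing both coordinates separately\<close>

locale diagonal_reparametrization = weingarten_surface +
  fixes V :: "(real \<times> real) set" and p q \<alpha> \<beta> :: "real \<Rightarrow> real"
  assumes open_V: "open V" and maps_into_D: "\<forall>(s,t)\<in>V. (p s, q t) \<in> D"
    and smooth_p: "smooth_on2 V (\<lambda>s t. p s)" and smooth_q: "smooth_on2 V (\<lambda>s t. q t)"
    and p_deriv: "\<forall>(s,t)\<in>V. (p has_real_derivative \<alpha> s) (at s) \<and> \<alpha> s > 0"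
    and q_deriv: "\<forall>(s,t)\<in>V. (q has_real_derivative \<beta> t) (at t) \<and> \<beta> t > 0"
begin

abbreviation y :: surf where "y \<equiv> \<lambda>s t. x (p s) (q t)"

lemma in_D: "(s,t) \<in> V \<Longrightarrow> (p s, q t) \<in> D"
  using maps_into_D by blast

lemma \<alpha>_pos: "(s,t) \<in> V \<Longrightarrow> \<alpha> s > 0"
  and \<beta>_pos: "(s,t) \<in> V \<Longrightarrow> \<beta> t > 0"
  using p_deriv q_deriv by blast+

lemma has_vector_derivative_p: "(s,t) \<in> V \<Longrightarrow> (p has_vector_derivative \<alpha> s) (at s)"
  and has_vector_derivative_q: "(s,t) \<in> V \<Longrightarrow> (q has_vector_derivative \<beta> t) (at t)"
  using p_deriv q_deriv by (auto simp flip: has_real_derivative_iff_has_vector_derivative)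

lemma smooth_\<alpha>: "smooth_on2 V (\<lambda>s t. \<alpha> s)"
  by (rule smooth_on2_cong[OF open_V _ smooth_on2_pu[OF smooth_p]])
    (use has_vector_derivative_p in \<open>auto intro: pu_eqI\<close>)

lemma smooth_\<beta>: "smooth_on2 V (\<lambda>s t. \<beta> t)"
  by (rule smooth_on2_cong[OF open_V _ smooth_on2_pv[OF smooth_q]])
    (use has_vector_derivative_q in \<open>auto intro: pv_eqI\<close>)

lemma has_vector_derivative_compose_s:
  assumes "smooth_on2 D X" "(s,t) \<in> V"
  shows "((\<lambda>s. X (p s) (q t)) has_vector_derivative \<alpha> s *\<^sub>R pu X (p s) (q t)) (at s)"
  using vector_diff_chain_at[OF has_vector_derivative_p[OF assms(2)]
      smooth_on2_has_pu[OF assms(1) in_D[OF assms(2)]]]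
  by (simp add: o_def)

lemma has_vector_derivative_compose_t:
  assumes "smooth_on2 D X" "(s,t) \<in> V"
  shows "((\<lambda>t. X (p s) (q t)) has_vector_derivative \<beta> t *\<^sub>R pv X (p s) (q t)) (at t)"
  using vector_diff_chain_at[OF has_vector_derivative_q[OF assms(2)]
      smooth_on2_has_pv[OF assms(1) in_D[OF assms(2)]]]
  by (simp add: o_def)

lemma pu_y: "(s,t) \<in> V \<Longrightarrow> pu y s t = \<alpha> s *\<^sub>R pu x (p s) (q t)"
  by (rule pu_eqI) (rule has_vector_derivative_compose_s[OF smooth_x])

lemma pv_y: "(s,t) \<in> V \<Longrightarrow> pv y s t = \<beta> t *\<^sub>R pv x (p s) (q t)"
  by (rule pv_eqI) (rule has_vector_derivative_compose_t[OF smooth_x])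

lemma pu_pu_y:
  assumes st: "(s,t) \<in> V"
  shows "pu (pu y) s t = pu (\<lambda>s t. \<alpha> s) s t *\<^sub>R pu x (p s) (q t) + \<alpha> s *\<^sub>R (\<alpha> s *\<^sub>R pu (pu x) (p s) (q t))"
proof -
  have "pu (pu y) s t = pu (\<lambda>s t. \<alpha> s *\<^sub>R pu x (p s) (q t)) s t"
    by (rule pu_cong[OF open_V _ st]) (use pu_y in auto)
  also have "\<dots> = pu (\<lambda>s t. \<alpha> s) s t *\<^sub>R pu x (p s) (q t) + \<alpha> s *\<^sub>R (\<alpha> s *\<^sub>R pu (pu x) (p s) (q t))"
    using bounded_bilinear.has_vector_derivative[OF bounded_bilinear_scaleR
        smooth_on2_has_pu[OF smooth_\<alpha> st] has_vector_derivative_compose_s[OF smooth_xu st]]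
    by (intro pu_eqI) (simp add: add.commute)
  finally show ?thesis .
qed

lemma pv_pu_y:
  assumes st: "(s,t) \<in> V"
  shows "pv (pu y) s t = \<alpha> s *\<^sub>R (\<beta> t *\<^sub>R pv (pu x) (p s) (q t))"
proof -
  have "pv (pu y) s t = pv (\<lambda>s t. \<alpha> s *\<^sub>R pu x (p s) (q t)) s t"
    by (rule pv_cong[OF open_V _ st]) (use pu_y in auto)
  also have "\<dots> = \<alpha> s *\<^sub>R (\<beta> t *\<^sub>R pv (pu x) (p s) (q t))"
    using bounded_linear.has_vector_derivative[OF bounded_linear_scaleR_right
        has_vector_derivative_compose_t[OF smooth_xu st]]
    by (intro pv_eqI) simp
  finally show ?thesis .
qed

lemma pv_pv_y:
  assumes st: "(s,t) \<in> V"
  shows "pv (pv y) s t = pv (\<lambda>s t. \<beta> t) s t *\<^sub>R pv x (p s) (q t) + \<beta> t *\<^sub>R (\<beta> t *\<^sub>R pv (pv x) (p s) (q t))"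
proof -
  have "pv (pv y) s t = pv (\<lambda>s t. \<beta> t *\<^sub>R pv x (p s) (q t)) s t"
    by (rule pv_cong[OF open_V _ st]) (use pv_y in auto)
  also have "\<dots> = pv (\<lambda>s t. \<beta> t) s t *\<^sub>R pv x (p s) (q t) + \<beta> t *\<^sub>R (\<beta> t *\<^sub>R pv (pv x) (p s) (q t))"
    using bounded_bilinear.has_vector_derivative[OF bounded_bilinear_scaleR
        smooth_on2_has_pv[OF smooth_\<beta> st] has_vector_derivative_compose_t[OF smooth_xv st]]
    by (intro pv_eqI) (simp add: add.commute)
  finally show ?thesis .
qed

lemma E_y: "(s,t) \<in> V \<Longrightarrow> fE y s t = (\<alpha> s)\<^sup>2 * fE x (p s) (q t)"
  and F_y: "(s,t) \<in> V \<Longrightarrow> fF y s t = \<alpha> s * \<beta> t * fF x (p s) (q t)"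
  and G_y: "(s,t) \<in> V \<Longrightarrow> fG y s t = (\<beta> t)\<^sup>2 * fG x (p s) (q t)"
  by (simp_all add: fE_def fF_def fG_def pu_y pv_y power2_eq_square)

lemma cross_y: "(s,t) \<in> V \<Longrightarrow> cross3 (pu y s t) (pv y s t)
    = (\<alpha> s * \<beta> t) *\<^sub>R cross3 (pu x (p s) (q t)) (pv x (p s) (q t))"
  by (simp add: pu_y pv_y cross_mult_left cross_mult_right)

lemma unit_normal_y: "(s,t) \<in> V \<Longrightarrow> unit_normal y s t = unit_normal x (p s) (q t)"
  using \<alpha>_pos[of s t] \<beta>_pos[of s t] by (simp add: unit_normal_def cross_y abs_of_pos)

lemma L_y: "(s,t) \<in> V \<Longrightarrow> fL y s t = (\<alpha> s)\<^sup>2 * fL x (p s) (q t)"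
  and M_y: "(s,t) \<in> V \<Longrightarrow> fM y s t = \<alpha> s * \<beta> t * fM x (p s) (q t)"
  and N_y: "(s,t) \<in> V \<Longrightarrow> fN y s t = (\<beta> t)\<^sup>2 * fN x (p s) (q t)"
  by (simp_all add: fL_def fM_def fN_def pu_pu_y pv_pu_y pv_pv_y unit_normal_y inner_add_left
      inner_commute[of "pu x _ _"] inner_commute[of "pv x _ _"] inner_unit_normal_pu inner_unit_normal_pv
      power2_eq_square)

lemma nu1_y: "(s,t) \<in> V \<Longrightarrow> nu1 y s t = nu1 x (p s) (q t)"
  and nu2_y: "(s,t) \<in> V \<Longrightarrow> nu2 y s t = nu2 x (p s) (q t)"
  using \<alpha>_pos[of s t] \<beta>_pos[of s t] by (simp_all add: nu1_def nu2_def L_y E_y N_y G_y)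

lemma pv_E_y: "(s,t) \<in> V \<Longrightarrow> pv (fE y) s t = (\<alpha> s)\<^sup>2 * (\<beta> t * pv (fE x) (p s) (q t))"
proof -
  assume st: "(s,t) \<in> V"
  have "pv (fE y) s t = pv (\<lambda>s t. (\<alpha> s)\<^sup>2 * fE x (p s) (q t)) s t"
    by (rule pv_cong[OF open_V _ st]) (use E_y in auto)
  also have "\<dots> = (\<alpha> s)\<^sup>2 * (\<beta> t * pv (fE x) (p s) (q t))"
    using bounded_linear.has_vector_derivative[OF bounded_linear_mult_right
        has_vector_derivative_compose_t[OF smooth_E st], of "(\<alpha> s)\<^sup>2"]
    by (intro pv_eqI) simp
  finally show ?thesis .
qed

lemma pu_G_y: "(s,t) \<in> V \<Longrightarrow> pu (fG y) s t = (\<beta> t)\<^sup>2 * (\<alpha> s * pu (fG x) (p s) (q t))"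
proof -
  assume st: "(s,t) \<in> V"
  have "pu (fG y) s t = pu (\<lambda>s t. (\<beta> t)\<^sup>2 * fG x (p s) (q t)) s t"
    by (rule pu_cong[OF open_V _ st]) (use G_y in auto)
  also have "\<dots> = (\<beta> t)\<^sup>2 * (\<alpha> s * pu (fG x) (p s) (q t))"
    using bounded_linear.has_vector_derivative[OF bounded_linear_mult_right
        has_vector_derivative_compose_s[OF smooth_G st], of "(\<beta> t)\<^sup>2"]
    by (intro pu_eqI) simp
  finally show ?thesis .
qed

lemma sqrt_E_y: "(s,t) \<in> V \<Longrightarrow> sqrt (fE y s t) = \<alpha> s * sqrt (fE x (p s) (q t))"
  and sqrt_G_y: "(s,t) \<in> V \<Longrightarrow> sqrt (fG y s t) = \<beta> t * sqrt (fG x (p s) (q t))"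
  using \<alpha>_pos[of s t] \<beta>_pos[of s t] by (simp_all add: E_y G_y real_sqrt_mult)

lemma gamma1_y: "(s,t) \<in> V \<Longrightarrow> gamma1 y s t = gamma1 x (p s) (q t)"
  and gamma2_y: "(s,t) \<in> V \<Longrightarrow> gamma2 y s t = gamma2 x (p s) (q t)"
proof -
  assume st: "(s,t) \<in> V"
  note pos = \<alpha>_pos[OF st] \<beta>_pos[OF st] E_pos[OF in_D[OF st]] G_pos[OF in_D[OF st]]
  show "gamma1 y s t = gamma1 x (p s) (q t)" "gamma2 y s t = gamma2 x (p s) (q t)"
    unfolding gamma1_def gamma2_def sqrt_E_y[OF st] sqrt_G_y[OF st]
    using pos by (simp_all add: pv_E_y[OF st] pu_G_y[OF st] E_y[OF st] G_y[OF st] field_simps power2_eq_square)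
qed

lemma lam_y: "(s,t) \<in> V \<Longrightarrow> lam y Phi (\<lambda>s t. nu (p s) (q t)) s t = ln (\<alpha> s) + lam x Phi nu (p s) (q t)"
  using \<alpha>_pos[of s t] E_pos[OF in_D, of s t] by (simp add: lam_def sqrt_E_y ln_mult)

lemma mu_y: "(s,t) \<in> V \<Longrightarrow> mu y Psi (\<lambda>s t. nu (p s) (q t)) s t = ln (\<beta> t) + mu x Psi nu (p s) (q t)"
  using \<beta>_pos[of s t] G_pos[OF in_D, of s t] by (simp add: mu_def sqrt_G_y ln_mult)

end

context diagonal_reparametrization
begin

lemma pu_nu_y:
  assumes st: "(s,t) \<in> V"
  shows "pu (\<lambda>s t. nu (p s) (q t)) s t = \<alpha> s * pu nu (p s) (q t)"
proof -
  have "((\<lambda>s. nu (p s) (q t)) has_real_derivative pu nu (p s) (q t) * \<alpha> s) (at s)"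
    using DERIV_chain2[where f="\<lambda>u. nu u (q t)" and g=p, OF has_real_pu_nu[OF in_D[OF st]]] p_deriv st
    by blast
  then show ?thesis by (intro pu_eqI) (simp add: has_real_derivative_iff_has_vector_derivative mult.commute)
qed

lemma pv_nu_y:
  assumes st: "(s,t) \<in> V"
  shows "pv (\<lambda>s t. nu (p s) (q t)) s t = \<beta> t * pv nu (p s) (q t)"
proof -
  have "((\<lambda>t. nu (p s) (q t)) has_real_derivative pv nu (p s) (q t) * \<beta> t) (at t)"
    using DERIV_chain2[where f="\<lambda>v. nu (p s) v" and g=q, OF has_real_pv_nu[OF in_D[OF st]]] q_deriv st
    by blast
  then show ?thesis by (intro pv_eqI) (simp add: has_real_derivative_iff_has_vector_derivative mult.commute)
qed

lemma differentiable_on_nu_y: "(\<lambda>(s,t). nu (p s) (q t)) differentiable_on V"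
  unfolding differentiable_on_def
proof
  fix z assume z: "z \<in> V"
  obtain s t where zst: "z = (s,t)" by (cases z)
  have st: "(s,t) \<in> V" using z zst by simp
  have dp: "(p has_derivative (\<lambda>h. \<alpha> s * h)) (at (fst (s,t)))"
    and dq: "(q has_derivative (\<lambda>h. \<beta> t * h)) (at (snd (s,t)))"
    using p_deriv q_deriv st by (auto simp: has_field_derivative_def)
  have "(\<lambda>z. (p (fst z), q (snd z))) differentiable (at (s,t))"
    using has_derivative_Pair[OF has_derivative_compose[OF has_derivative_fst[OF has_derivative_ident] dp]
        has_derivative_compose[OF has_derivative_snd[OF has_derivative_ident] dq]]
    unfolding differentiable_def by blast
  moreover have "(\<lambda>(u,v). nu u v) differentiable (at (p (fst (s,t)), q (snd (s,t))))"
    using nu_differentiable[OF in_D[OF st]] by simp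
  ultimately have "((\<lambda>(u,v). nu u v) \<circ> (\<lambda>z. (p (fst z), q (snd z)))) differentiable (at (s,t))"
    by (rule differentiable_chain_at)
  moreover have "(\<lambda>(u,v). nu u v) \<circ> (\<lambda>z. (p (fst z), q (snd z))) = (\<lambda>(s,t). nu (p s) (q t))"
    by (auto simp: fun_eq_iff)
  ultimately show "(\<lambda>(s,t). nu (p s) (q t)) differentiable (at z within V)"
    using zst by (auto intro: differentiable_at_withinI)
qed

lemma regular_surface_y: "regular_surface V y"
  unfolding regular_surface_def
proof (intro conjI ballI)
  show "open V" by (rule open_V)
  show "smooth_on2 V y"
    by (rule smooth_on2_compose_separate[OF open_domain open_V smooth_x smooth_p smooth_q maps_into_D])
  fix z assume "z \<in> V"
  then obtain s t where st: "(s,t) \<in> V" "z = (s,t)" by (cases z) auto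
  then have "\<alpha> s * \<beta> t \<noteq> 0" using \<alpha>_pos \<beta>_pos by (metis mult_pos_pos less_irrefl)
  then show "case z of (s,t) \<Rightarrow> cross3 (pu y s t) (pv y s t) \<noteq> 0"
    using st cross_y[OF st(1)] cross_nonzero[OF in_D[OF st(1)]] by simp
qed

lemma principal_params_y: "principal_params V y"
  unfolding principal_params_def
proof (clarify)
  fix s t assume st: "(s,t) \<in> V"
  show "fF y s t = 0 \<and> fM y s t = 0"
    using F_y[OF st] M_y[OF st] F_eq_0 M_eq_0 in_D[OF st] by auto
qed

lemma strongly_regular_y: "strongly_regular V y"
  unfolding strongly_regular_def
proof (clarify)
  fix s t assume st: "(s,t) \<in> V"
  show "(nu1 y s t - nu2 y s t) * gamma1 y s t * gamma2 y s t \<noteq> 0 \<and> nu1 y s t - nu2 y s t > 0"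
    using strongly_regular in_D[OF st]
    unfolding nu1_y[OF st] nu2_y[OF st] gamma1_y[OF st] gamma2_y[OF st] strongly_regular_def by blast
qed

lemma weingarten_data_y: "weingarten_data V y I f g (\<lambda>s t. nu (p s) (q t))"
proof -
  have "nu (p s) (q t) \<in> I \<and> pu (\<lambda>s t. nu (p s) (q t)) s t * pv (\<lambda>s t. nu (p s) (q t)) s t \<noteq> 0
      \<and> nu1 y s t = f (nu (p s) (q t)) \<and> nu2 y s t = g (nu (p s) (q t))" if st: "(s,t) \<in> V" for s t
    using nu_in_I[OF in_D[OF st]] pu_nu_pv_nu_nonzero[OF in_D[OF st]]
      nu1_eq_f[OF in_D[OF st]] nu2_eq_g[OF in_D[OF st]] \<alpha>_pos[OF st] \<beta>_pos[OF st]
    by (simp add: pu_nu_y[OF st] pv_nu_y[OF st] nu1_y[OF st] nu2_y[OF st])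
  then show ?thesis
    using weingarten differentiable_on_nu_y by (auto simp: weingarten_data_def)
qed

end

section \<open>Geometric principal parameters\<close>

lemma open_contains_square:
  fixes D :: "(real \<times> real) set"
  assumes "open D" "(u0,v0) \<in> D"
  obtains d where "d > 0" "\<And>u v. \<bar>u - u0\<bar> \<le> d \<Longrightarrow> \<bar>v - v0\<bar> \<le> d \<Longrightarrow> (u,v) \<in> D"
proof -
  obtain r where r: "r > 0" "ball (u0,v0) r \<subseteq> D" using assms openE by blast
  show ?thesis
  proof
    show "r/4 > 0" using r by simp
    fix u v assume "\<bar>u - u0\<bar> \<le> r/4" "\<bar>v - v0\<bar> \<le> r/4"
    then have "dist (u,v) (u0,v0) < r" using dist_Pair_le_abs_sum[of u v u0 v0] r by linarith
    then show "(u,v) \<in> D" using r by (auto simp: dist_commute)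
  qed
qed

lemma exists_inverse_pair_with_density:
  fixes h :: "real \<Rightarrow> real"
  assumes "d > 0" "continuous_on {c-2*d..c+2*d} h" "\<And>u. u \<in> {c-2*d..c+2*d} \<Longrightarrow> h u > 0"
  obtains P p where "\<And>u. u \<in> {c-d..c+d} \<Longrightarrow> (P has_real_derivative h u) (at u)"
    "\<And>u. u \<in> {c-d<..<c+d} \<Longrightarrow> P u \<in> {P (c-d)<..<P (c+d)} \<and> p (P u) = u"
    "\<And>s. s \<in> {P (c-d)<..<P (c+d)} \<Longrightarrow>
      p s \<in> {c-d<..<c+d} \<and> P (p s) = s \<and> (p has_real_derivative inverse (h (p s))) (at s)"
proof -
  obtain P where P: "\<And>u. u \<in> {c-d..c+d} \<Longrightarrow> (P has_real_derivative h u) (at u)"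
    using exists_antiderivative_on_interval[of "c-2*d" "c-d" "c+d" "c+2*d" h] assms(1,2) by auto
  have h: "h u > 0" if "u \<in> {c-d..c+d}" for u using assms(1,3) that by auto
  have "c - d < c + d" using assms(1) by simp
  note inverse = increasing_function_inverse[OF this P h]
  show ?thesis by (rule that[OF P inverse])
qed

lemma param_change_diagonal:
  fixes p q P Q :: "real \<Rightarrow> real"
  assumes "open A" "open B" "open S" "open T"
    and "\<forall>s\<in>S. p s \<in> A \<and> P (p s) = s" "\<forall>t\<in>T. q t \<in> B \<and> Q (q t) = t"
    and "\<forall>u\<in>A. P u \<in> S \<and> p (P u) = u" "\<forall>v\<in>B. Q v \<in> T \<and> q (Q v) = v"
    and "smooth_on2 (S \<times> T) (\<lambda>s t. p s)" "smooth_on2 (S \<times> T) (\<lambda>s t. q t)"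
    and "smooth_on2 (A \<times> B) (\<lambda>u v. P u)" "smooth_on2 (A \<times> B) (\<lambda>u v. Q v)"
  shows "param_change (S \<times> T) (A \<times> B) (\<lambda>s t. p s) (\<lambda>s t. q t)"
proof -
  have "bij_betw (\<lambda>(s,t). (p s, q t)) (S \<times> T) (A \<times> B)"
    by (rule bij_betw_byWitness[where f'="\<lambda>(u,v). (P u, Q v)"]) (use assms(5-8) in auto)
  then show ?thesis
    unfolding param_change_def using assms by (intro conjI exI[of _ "\<lambda>u v. P u"] exI[of _ "\<lambda>u v. Q v"] open_Times) auto
qed

context weingarten_surface
begin

lemma separated_square:
  assumes "(u0,v0) \<in> D"
  obtains d where "d > 0" "\<And>u v. \<bar>u - u0\<bar> \<le> 2*d \<Longrightarrow> \<bar>v - v0\<bar> \<le> 2*d \<Longrightarrow> (u,v) \<in> D"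
    "\<And>u v. \<bar>u - u0\<bar> \<le> 2*d \<Longrightarrow> \<bar>v - v0\<bar> \<le> 2*d \<Longrightarrow> lam x Phi nu u v = lam x Phi nu u v0"
    "\<And>u v. \<bar>u - u0\<bar> \<le> 2*d \<Longrightarrow> \<bar>v - v0\<bar> \<le> 2*d \<Longrightarrow> mu x Psi nu u v = mu x Psi nu u0 v"
proof -
  obtain e where e: "e > 0" and sq: "\<And>u v. \<bar>u - u0\<bar> \<le> e \<Longrightarrow> \<bar>v - v0\<bar> \<le> e \<Longrightarrow> (u,v) \<in> D"
    using open_contains_square[OF open_domain assms] by blast
  show ?thesis
  proof (rule that[of "e/2"])
    fix u v assume uv: "\<bar>u - u0\<bar> \<le> 2*(e/2)" "\<bar>v - v0\<bar> \<le> 2*(e/2)"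
    then show "(u,v) \<in> D" using sq by simp
    show "lam x Phi nu u v = lam x Phi nu u v0"
      by (rule lam_eq_on_vertical_segment) (use uv sq in \<open>auto simp: closed_segment_eq_real_ivl abs_le_iff\<close>)
    show "mu x Psi nu u v = mu x Psi nu u0 v"
      by (rule mu_eq_on_horizontal_segment) (use uv sq in \<open>auto simp: closed_segment_eq_real_ivl abs_le_iff\<close>)
  qed (use e in simp)
qed

end

context weingarten_surface
begin

lemma geometric_coordinate_u:
  assumes d: "d > 0" and sq: "\<And>u v. \<bar>u - u0\<bar> \<le> 2*d \<Longrightarrow> \<bar>v - v0\<bar> \<le> 2*d \<Longrightarrow> (u,v) \<in> D"
    and lam_sep: "\<And>u v. \<bar>u - u0\<bar> \<le> 2*d \<Longrightarrow> \<bar>v - v0\<bar> \<le> 2*d \<Longrightarrow> lam x Phi nu u v = lam x Phi nu u v0"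
  obtains P p where
    "\<forall>s\<in>{P (u0-d)<..<P (u0+d)}. p s \<in> {u0-d<..<u0+d} \<and> P (p s) = s
      \<and> (p has_real_derivative exp (- lam x Phi nu (p s) v0)) (at s)"
    "\<forall>u\<in>{u0-d<..<u0+d}. P u \<in> {P (u0-d)<..<P (u0+d)} \<and> p (P u) = u"
    "smooth_on2 ({P (u0-d)<..<P (u0+d)} \<times> UNIV) (\<lambda>s t. p s)"
    "smooth_on2 ({u0-d<..<u0+d} \<times> {v0-d<..<v0+d}) (\<lambda>u v. P u)"
proof -
  define A B where "A = {u0-d<..<u0+d}" and "B = {v0-d<..<v0+d}"
  have box: "\<bar>u - u0\<bar> \<le> 2*d" "\<bar>v - v0\<bar> \<le> 2*d" if "u \<in> A" "v \<in> B" for u v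
    using that d by (auto simp: A_def B_def abs_le_iff)
  have AB: "open (A \<times> B)" "A \<times> B \<subseteq> D" "v0 \<in> B"
    using box sq d by (auto simp: A_def B_def intro: open_Times)
  have smooth_lam_AB: "smooth_on2 (A \<times> B) (lam x Phi nu)"
    by (rule smooth_on2_subset[OF smooth_lam AB(2)])
  have "continuous_on {u0-2*d..u0+2*d} (\<lambda>u. (\<lambda>(u,v). lam x Phi nu u v) (u, v0))"
    by (rule continuous_on_compose2[OF smooth_on2_continuous[OF smooth_lam]])
      (use sq d in \<open>auto intro!: continuous_intros simp: abs_le_iff\<close>)
  then have "continuous_on {u0-2*d..u0+2*d} (\<lambda>u. exp (lam x Phi nu u v0))"
    by (auto intro: continuous_on_exp)
  from exists_inverse_pair_with_density[OF d this exp_gt_zero]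
  obtain P p where P: "\<And>u. u \<in> {u0-d..u0+d} \<Longrightarrow> (P has_real_derivative exp (lam x Phi nu u v0)) (at u)"
      "\<And>u. u \<in> A \<Longrightarrow> P u \<in> {P (u0-d)<..<P (u0+d)} \<and> p (P u) = u"
      "\<And>s. s \<in> {P (u0-d)<..<P (u0+d)} \<Longrightarrow> p s \<in> A \<and> P (p s) = s
        \<and> (p has_real_derivative inverse (exp (lam x Phi nu (p s) v0))) (at s)"
    unfolding A_def by auto
  show ?thesis
  proof (rule that, fold A_def B_def)
    show "\<forall>s\<in>{P (u0-d)<..<P (u0+d)}. p s \<in> A \<and> P (p s) = s
        \<and> (p has_real_derivative exp (- lam x Phi nu (p s) v0)) (at s)"
      using P(3) by (simp add: exp_minus)
    then show "smooth_on2 ({P (u0-d)<..<P (u0+d)} \<times> UNIV) (\<lambda>s t. p s)"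
      using AB(3)
      by (intro smooth_on2_ode_solution_fst[OF AB(1) _ smooth_on2_exp[OF AB(1) smooth_on2_uminus[OF AB(1) smooth_lam_AB]]])
        (auto intro: open_Times)
    show "smooth_on2 (A \<times> B) (\<lambda>u v. P u)"
    proof (rule smooth_on2_antiderivative_fst[OF AB(1) smooth_on2_exp[OF AB(1) smooth_lam_AB]], clarify)
      fix u v assume uv: "u \<in> A" "v \<in> B"
      then have "lam x Phi nu u v = lam x Phi nu u v0" using lam_sep box by blast
      then show "(P has_real_derivative exp (lam x Phi nu u v)) (at u)" using P(1)[of u] uv by (simp add: A_def)
    qed
  qed (use P(2) in blast)
qed

lemma geometric_coordinate_v:
  assumes d: "d > 0" and sq: "\<And>u v. \<bar>u - u0\<bar> \<le> 2*d \<Longrightarrow> \<bar>v - v0\<bar> \<le> 2*d \<Longrightarrow> (u,v) \<in> D"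
    and mu_sep: "\<And>u v. \<bar>u - u0\<bar> \<le> 2*d \<Longrightarrow> \<bar>v - v0\<bar> \<le> 2*d \<Longrightarrow> mu x Psi nu u v = mu x Psi nu u0 v"
  obtains Q q where
    "\<forall>t\<in>{Q (v0-d)<..<Q (v0+d)}. q t \<in> {v0-d<..<v0+d} \<and> Q (q t) = t
      \<and> (q has_real_derivative exp (- mu x Psi nu u0 (q t))) (at t)"
    "\<forall>v\<in>{v0-d<..<v0+d}. Q v \<in> {Q (v0-d)<..<Q (v0+d)} \<and> q (Q v) = v"
    "smooth_on2 (UNIV \<times> {Q (v0-d)<..<Q (v0+d)}) (\<lambda>s t. q t)"
    "smooth_on2 ({u0-d<..<u0+d} \<times> {v0-d<..<v0+d}) (\<lambda>u v. Q v)"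
proof -
  define A B where "A = {u0-d<..<u0+d}" and "B = {v0-d<..<v0+d}"
  have box: "\<bar>u - u0\<bar> \<le> 2*d" "\<bar>v - v0\<bar> \<le> 2*d" if "u \<in> A" "v \<in> B" for u v
    using that d by (auto simp: A_def B_def abs_le_iff)
  have AB: "open (A \<times> B)" "A \<times> B \<subseteq> D" "u0 \<in> A"
    using box sq d by (auto simp: A_def B_def intro: open_Times)
  have smooth_mu_AB: "smooth_on2 (A \<times> B) (mu x Psi nu)"
    by (rule smooth_on2_subset[OF smooth_mu AB(2)])
  have "continuous_on {v0-2*d..v0+2*d} (\<lambda>v. (\<lambda>(u,v). mu x Psi nu u v) (u0, v))"
    by (rule continuous_on_compose2[OF smooth_on2_continuous[OF smooth_mu]])
      (use sq d in \<open>auto intro!: continuous_intros simp: abs_le_iff\<close>)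
  then have "continuous_on {v0-2*d..v0+2*d} (\<lambda>v. exp (mu x Psi nu u0 v))"
    by (auto intro: continuous_on_exp)
  from exists_inverse_pair_with_density[OF d this exp_gt_zero]
  obtain Q q where Q: "\<And>v. v \<in> {v0-d..v0+d} \<Longrightarrow> (Q has_real_derivative exp (mu x Psi nu u0 v)) (at v)"
      "\<And>v. v \<in> B \<Longrightarrow> Q v \<in> {Q (v0-d)<..<Q (v0+d)} \<and> q (Q v) = v"
      "\<And>t. t \<in> {Q (v0-d)<..<Q (v0+d)} \<Longrightarrow> q t \<in> B \<and> Q (q t) = t
        \<and> (q has_real_derivative inverse (exp (mu x Psi nu u0 (q t)))) (at t)"
    unfolding B_def by auto
  show ?thesis
  proof (rule that, fold A_def B_def)
    show "\<forall>t\<in>{Q (v0-d)<..<Q (v0+d)}. q t \<in> B \<and> Q (q t) = t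
        \<and> (q has_real_derivative exp (- mu x Psi nu u0 (q t))) (at t)"
      using Q(3) by (simp add: exp_minus)
    then show "smooth_on2 (UNIV \<times> {Q (v0-d)<..<Q (v0+d)}) (\<lambda>s t. q t)"
      using AB(3)
      by (intro smooth_on2_ode_solution_snd[OF AB(1) _ smooth_on2_exp[OF AB(1) smooth_on2_uminus[OF AB(1) smooth_mu_AB]]])
        (auto intro: open_Times)
    show "smooth_on2 (A \<times> B) (\<lambda>u v. Q v)"
    proof (rule smooth_on2_antiderivative_snd[OF AB(1) smooth_on2_exp[OF AB(1) smooth_mu_AB]], clarify)
      fix u v assume uv: "u \<in> A" "v \<in> B"
      then have "mu x Psi nu u v = mu x Psi nu u0 v" using mu_sep box by blast
      then show "(Q has_real_derivative exp (mu x Psi nu u v)) (at v)" using Q(1)[of v] uv by (simp add: B_def)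
    qed
  qed (use Q(2) in blast)
qed

end

context diagonal_reparametrization
begin

lemma geometric_params_y:
  assumes "\<forall>(s,t)\<in>V. ln (\<alpha> s) = - lam x Phi nu (p s) (q t)"
    and "\<forall>(s,t)\<in>V. ln (\<beta> t) = - mu x Psi nu (p s) (q t)"
  shows "geometric_params V y Phi Psi (\<lambda>s t. nu (p s) (q t))"
  unfolding geometric_params_def using assms lam_y mu_y by (intro conjI exI[of _ 0]) auto

end

context weingarten_surface
begin

lemma exists_geometric_reparametrization:
  assumes "(u0,v0) \<in> D"
  shows "\<exists>U V p q. (u0, v0) \<in> U \<and> U \<subseteq> D \<and> param_change V U p q \<and>
           (let y = (\<lambda>s t. x (p s t) (q s t)); nu' = (\<lambda>s t. nu (p s t) (q s t)) in
              regular_surface V y \<and> principal_params V y \<and> strongly_regular V y \<and>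
              weingarten_data V y I f g nu' \<and> geometric_params V y Phi Psi nu')"
proof -
  obtain d where d: "d > 0" and sq: "\<And>u v. \<bar>u - u0\<bar> \<le> 2*d \<Longrightarrow> \<bar>v - v0\<bar> \<le> 2*d \<Longrightarrow> (u,v) \<in> D"
    and lam_sep: "\<And>u v. \<bar>u - u0\<bar> \<le> 2*d \<Longrightarrow> \<bar>v - v0\<bar> \<le> 2*d \<Longrightarrow> lam x Phi nu u v = lam x Phi nu u v0"
    and mu_sep: "\<And>u v. \<bar>u - u0\<bar> \<le> 2*d \<Longrightarrow> \<bar>v - v0\<bar> \<le> 2*d \<Longrightarrow> mu x Psi nu u v = mu x Psi nu u0 v"
    using separated_square[OF assms] by blast
  obtain P p where p: "\<forall>s\<in>{P (u0-d)<..<P (u0+d)}. p s \<in> {u0-d<..<u0+d} \<and> P (p s) = s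
        \<and> (p has_real_derivative exp (- lam x Phi nu (p s) v0)) (at s)"
      "\<forall>u\<in>{u0-d<..<u0+d}. P u \<in> {P (u0-d)<..<P (u0+d)} \<and> p (P u) = u"
      "smooth_on2 ({P (u0-d)<..<P (u0+d)} \<times> UNIV) (\<lambda>s t. p s)"
      "smooth_on2 ({u0-d<..<u0+d} \<times> {v0-d<..<v0+d}) (\<lambda>u v. P u)"
    using geometric_coordinate_u[OF d sq lam_sep] by blast
  obtain Q q where q: "\<forall>t\<in>{Q (v0-d)<..<Q (v0+d)}. q t \<in> {v0-d<..<v0+d} \<and> Q (q t) = t
        \<and> (q has_real_derivative exp (- mu x Psi nu u0 (q t))) (at t)"
      "\<forall>v\<in>{v0-d<..<v0+d}. Q v \<in> {Q (v0-d)<..<Q (v0+d)} \<and> q (Q v) = v"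
      "smooth_on2 (UNIV \<times> {Q (v0-d)<..<Q (v0+d)}) (\<lambda>s t. q t)"
      "smooth_on2 ({u0-d<..<u0+d} \<times> {v0-d<..<v0+d}) (\<lambda>u v. Q v)"
    using geometric_coordinate_v[OF d sq mu_sep] by blast
  define U V where "U = {u0-d<..<u0+d} \<times> {v0-d<..<v0+d}"
    and "V = {P (u0-d)<..<P (u0+d)} \<times> {Q (v0-d)<..<Q (v0+d)}"
  have box: "\<bar>u - u0\<bar> \<le> 2*d" "\<bar>v - v0\<bar> \<le> 2*d" if "(u,v) \<in> U" for u v
    using that d by (auto simp: U_def abs_le_iff)
  have smooth_V: "smooth_on2 V (\<lambda>s t. p s)" "smooth_on2 V (\<lambda>s t. q t)"
    by (rule smooth_on2_subset[OF p(3)], force simp: V_def, rule smooth_on2_subset[OF q(3)], force simp: V_def)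
  have change: "param_change V U (\<lambda>s t. p s) (\<lambda>s t. q t)"
    unfolding U_def V_def
    by (rule param_change_diagonal[OF _ _ _ _ _ _ p(2) q(2) smooth_V[unfolded V_def] p(4) q(4)])
      (use p(1) q(1) in auto)
  have maps: "(p s, q t) \<in> U" if "(s,t) \<in> V" for s t
    using that p(1) q(1) by (auto simp: U_def V_def)
  have "open V" unfolding V_def by (auto intro: open_Times)
  moreover have "\<forall>(s,t)\<in>V. (p s, q t) \<in> D" using maps box sq by blast
  moreover have "\<forall>(s,t)\<in>V. (p has_real_derivative exp (- lam x Phi nu (p s) v0)) (at s)
      \<and> exp (- lam x Phi nu (p s) v0) > 0"
    using p(1) by (auto simp: V_def)
  moreover have "\<forall>(s,t)\<in>V. (q has_real_derivative exp (- mu x Psi nu u0 (q t))) (at t)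
      \<and> exp (- mu x Psi nu u0 (q t)) > 0"
    using q(1) by (auto simp: V_def)
  ultimately interpret diagonal_reparametrization D x I f g Phi Psi nu V p q
      "\<lambda>s. exp (- lam x Phi nu (p s) v0)" "\<lambda>t. exp (- mu x Psi nu u0 (q t))"
    using smooth_V by unfold_locales
  have "lam x Phi nu (p s) (q t) = lam x Phi nu (p s) v0" "mu x Psi nu (p s) (q t) = mu x Psi nu u0 (q t)"
    if "(s,t) \<in> V" for s t
    using lam_sep[OF box[OF maps[OF that]]] mu_sep[OF box[OF maps[OF that]]] .
  then have "geometric_params V y Phi Psi (\<lambda>s t. nu (p s) (q t))"
    by (intro geometric_params_y) auto
  moreover have "(u0,v0) \<in> U" "U \<subseteq> D" using d box sq by (auto simp: U_def)
  ultimately show ?thesis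
    using change regular_surface_y principal_params_y strongly_regular_y weingarten_data_y
    by (intro exI[of _ U] exI[of _ V] exI[of _ "\<lambda>s t. p s"] exI[of _ "\<lambda>s t. q t"]) (simp add: Let_def)
qed

end

theorem theorem4p4:
  fixes D :: "(real \<times> real) set" and x :: surf and I :: "real set"
    and f g Phi Psi :: "real \<Rightarrow> real" and nu :: "real \<Rightarrow> real \<Rightarrow> real"
    and u0 v0 :: real
  assumes "regular_surface D x"
    and "principal_params D x"
    and "strongly_regular D x"
    and "weingarten_data D x I f g nu"
    and "\<forall>t\<in>I. (Phi has_real_derivative (deriv f t / (f t - g t))) (at t)"
    and "\<forall>t\<in>I. (Psi has_real_derivative (deriv g t / (g t - f t))) (at t)"
    and "(u0, v0) \<in> D"
  shows "\<exists>U V p q. (u0, v0) \<in> U \<and> U \<subseteq> D \<and> param_change V U p q \<and>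
           (let y = (\<lambda>s t. x (p s t) (q s t)); nu' = (\<lambda>s t. nu (p s t) (q s t)) in
              regular_surface V y \<and> principal_params V y \<and> strongly_regular V y \<and>
              weingarten_data V y I f g nu' \<and> geometric_params V y Phi Psi nu')"
proof -
  interpret weingarten_surface D x I f g Phi Psi nu
    by (intro weingarten_surface.intro principal_surface.intro weingarten_surface_axioms.intro assms(1-6))
  show ?thesis by (rule exists_geometric_reparametrization[OF assms(7)])
qed

end
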